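(* Let $S^0$ be an adequate semigroup with semilattice of idempotents $E^0$. Let $L$ be a left adequate semigroup and $R$ a right adequate semigroup and suppose that $S^0$ is a common quasi-ideal adequate transversal of $L$ and $R$. For $x\in L$ write $x=e_x\overline{x}f_x$ and for $a\in R$ write $a=e_a\overline{a}f_a$ for the factorisations given by the transversal $S^0$ (so $\overline{x},\overline{a}\in S^0$, $e_x\in E(L)$, $f_x\in E^0$, $e_a\in E^0$, $f_a\in E(R)$). Let $R\times L\to S^0$ be a map denoted by $(a,x)\mapsto a\ast x$ and suppose that $\ast$ satisfies (1) for all $y,z\in L$, $a,b\in R$ with $\overline{y}=\overline{b}$, $(a\ast y)f_b\ast z = a\ast e_y(b\ast z)$; (2) if $a\in S^0$ or $x\in S^0$ then $a\ast x = ax$. Let $T = \{(x,a)\in L\times R : \overline{x} = \overline{a}\}$ and define $(x,a)(y,b)=(e_x(a\ast y),(a\ast y)f_b)$. Then $T$ is an abundant semigroup with a quasi-ideal adequate transversal $T^0=\{(s,s):s\in S^0\}$ with $T^0\cong S^0$. Moreover every abundant semigroup with a quasi-ideal adequate transversal can be constructed (up to isomorphism) in this way.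
   Context: A semigroup is abundant if every ${\cal R}^\ast$-class and every ${\cal L}^\ast$-class contains an idempotent; it is adequate if moreover its idempotents commute; it is left (resp. right) adequate if it is abundant and every ${\cal R}^\ast$-class (resp. ${\cal L}^\ast$-class) contains a unique idempotent. For $a$ in an adequate semigroup, $a^+$ and $a^\ast$ denote the unique idempotents in the ${\cal R}^\ast$- and ${\cal L}^\ast$-classes of $a$. An adequate $\ast$-subsemigroup $S^0$ of an abundant semigroup $S$ is an adequate transversal if each $x\in S$ has a unique $\overline{x}\in S^0$ and idempotents $e_x,f_x\in E(S)$ with $x=e_x\overline{x}f_x$, $e_x\,{\cal L}\,\overline{x}^+$, $f_x\,{\cal R}\,\overline{x}^\ast$ ($e_x,f_x$ are then uniquely determined). $S^0$ is a quasi-ideal if $S^0SS^0\subseteq S^0$. *)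

theory Defs
  imports Main
begin

definition semigroup_on :: "'a set \<Rightarrow> ('a \<Rightarrow> 'a \<Rightarrow> 'a) \<Rightarrow> bool" where
  "semigroup_on S m \<longleftrightarrow> (\<forall>a\<in>S. \<forall>b\<in>S. m a b \<in> S) \<and>
     (\<forall>a\<in>S. \<forall>b\<in>S. \<forall>c\<in>S. m (m a b) c = m a (m b c))"

definition idems :: "'a set \<Rightarrow> ('a \<Rightarrow> 'a \<Rightarrow> 'a) \<Rightarrow> 'a set" where
  "idems S m = {e\<in>S. m e e = e}"

text \<open>The relation R*: a R* b iff for all x, y in S^1, xa = ya iff xb = yb.
  (The clauses with x or y the adjoined identity are spelled out.)\<close>
definition Rstar :: "'a set \<Rightarrow> ('a \<Rightarrow> 'a \<Rightarrow> 'a) \<Rightarrow> 'a \<Rightarrow> 'a \<Rightarrow> bool" where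
  "Rstar S m a b \<longleftrightarrow> a \<in> S \<and> b \<in> S \<and>
     (\<forall>x\<in>S. \<forall>y\<in>S. m x a = m y a \<longleftrightarrow> m x b = m y b) \<and>
     (\<forall>x\<in>S. m x a = a \<longleftrightarrow> m x b = b)"

definition Lstar :: "'a set \<Rightarrow> ('a \<Rightarrow> 'a \<Rightarrow> 'a) \<Rightarrow> 'a \<Rightarrow> 'a \<Rightarrow> bool" where
  "Lstar S m a b \<longleftrightarrow> a \<in> S \<and> b \<in> S \<and>
     (\<forall>x\<in>S. \<forall>y\<in>S. m a x = m a y \<longleftrightarrow> m b x = m b y) \<and>
     (\<forall>x\<in>S. m a x = a \<longleftrightarrow> m b x = b)"

definition GreenL :: "'a set \<Rightarrow> ('a \<Rightarrow> 'a \<Rightarrow> 'a) \<Rightarrow> 'a \<Rightarrow> 'a \<Rightarrow> bool" where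
  "GreenL S m a b \<longleftrightarrow> a \<in> S \<and> b \<in> S \<and>
     (a = b \<or> (\<exists>x\<in>S. a = m x b)) \<and> (b = a \<or> (\<exists>y\<in>S. b = m y a))"

definition GreenR :: "'a set \<Rightarrow> ('a \<Rightarrow> 'a \<Rightarrow> 'a) \<Rightarrow> 'a \<Rightarrow> 'a \<Rightarrow> bool" where
  "GreenR S m a b \<longleftrightarrow> a \<in> S \<and> b \<in> S \<and>
     (a = b \<or> (\<exists>x\<in>S. a = m b x)) \<and> (b = a \<or> (\<exists>y\<in>S. b = m a y))"

definition abundant :: "'a set \<Rightarrow> ('a \<Rightarrow> 'a \<Rightarrow> 'a) \<Rightarrow> bool" where
  "abundant S m \<longleftrightarrow> semigroup_on S m \<and>
     (\<forall>a\<in>S. \<exists>e\<in>idems S m. Rstar S m a e) \<and>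
     (\<forall>a\<in>S. \<exists>f\<in>idems S m. Lstar S m a f)"

definition adequate :: "'a set \<Rightarrow> ('a \<Rightarrow> 'a \<Rightarrow> 'a) \<Rightarrow> bool" where
  "adequate S m \<longleftrightarrow> abundant S m \<and>
     (\<forall>e\<in>idems S m. \<forall>f\<in>idems S m. m e f = m f e)"

definition left_adequate :: "'a set \<Rightarrow> ('a \<Rightarrow> 'a \<Rightarrow> 'a) \<Rightarrow> bool" where
  "left_adequate S m \<longleftrightarrow> abundant S m \<and>
     (\<forall>a\<in>S. \<exists>!e. e \<in> idems S m \<and> Rstar S m a e)"

definition right_adequate :: "'a set \<Rightarrow> ('a \<Rightarrow> 'a \<Rightarrow> 'a) \<Rightarrow> bool" where
  "right_adequate S m \<longleftrightarrow> abundant S m \<and>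
     (\<forall>a\<in>S. \<exists>!f. f \<in> idems S m \<and> Lstar S m a f)"

definition aplus :: "'a set \<Rightarrow> ('a \<Rightarrow> 'a \<Rightarrow> 'a) \<Rightarrow> 'a \<Rightarrow> 'a" where
  "aplus S m a = (THE e. e \<in> idems S m \<and> Rstar S m a e)"

definition astar :: "'a set \<Rightarrow> ('a \<Rightarrow> 'a \<Rightarrow> 'a) \<Rightarrow> 'a \<Rightarrow> 'a" where
  "astar S m a = (THE f. f \<in> idems S m \<and> Lstar S m a f)"

definition adequate_star_subsemigroup ::
  "'a set \<Rightarrow> ('a \<Rightarrow> 'a \<Rightarrow> 'a) \<Rightarrow> 'a set \<Rightarrow> bool" where
  "adequate_star_subsemigroup S m U \<longleftrightarrow> U \<subseteq> S \<and> adequate U m \<and>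
     (\<forall>a\<in>U. \<exists>e\<in>idems U m. Rstar S m a e) \<and>
     (\<forall>a\<in>U. \<exists>f\<in>idems U m. Lstar S m a f)"

definition transversal_factorisation ::
  "'a set \<Rightarrow> ('a \<Rightarrow> 'a \<Rightarrow> 'a) \<Rightarrow> 'a set \<Rightarrow> 'a \<Rightarrow> 'a \<Rightarrow> 'a \<Rightarrow> 'a \<Rightarrow> bool" where
  "transversal_factorisation S m S0 x xb e f \<longleftrightarrow>
     xb \<in> S0 \<and> e \<in> idems S m \<and> f \<in> idems S m \<and> x = m (m e xb) f \<and>
     GreenL S m e (aplus S0 m xb) \<and> GreenR S m f (astar S0 m xb)"

definition adequate_transversal :: "'a set \<Rightarrow> ('a \<Rightarrow> 'a \<Rightarrow> 'a) \<Rightarrow> 'a set \<Rightarrow> bool" where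
  "adequate_transversal S m S0 \<longleftrightarrow> abundant S m \<and> adequate_star_subsemigroup S m S0 \<and>
     (\<forall>x\<in>S. \<exists>!xb. \<exists>e f. transversal_factorisation S m S0 x xb e f)"

definition quasi_ideal :: "'a set \<Rightarrow> ('a \<Rightarrow> 'a \<Rightarrow> 'a) \<Rightarrow> 'a set \<Rightarrow> bool" where
  "quasi_ideal S m S0 \<longleftrightarrow> (\<forall>s\<in>S0. \<forall>x\<in>S. \<forall>t\<in>S0. m (m s x) t \<in> S0)"

definition qi_adequate_transversal :: "'a set \<Rightarrow> ('a \<Rightarrow> 'a \<Rightarrow> 'a) \<Rightarrow> 'a set \<Rightarrow> bool" where
  "qi_adequate_transversal S m S0 \<longleftrightarrow> adequate_transversal S m S0 \<and> quasi_ideal S m S0"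

definition tbar :: "'a set \<Rightarrow> ('a \<Rightarrow> 'a \<Rightarrow> 'a) \<Rightarrow> 'a set \<Rightarrow> 'a \<Rightarrow> 'a" where
  "tbar S m S0 x = (THE xb. \<exists>e f. transversal_factorisation S m S0 x xb e f)"

definition te :: "'a set \<Rightarrow> ('a \<Rightarrow> 'a \<Rightarrow> 'a) \<Rightarrow> 'a set \<Rightarrow> 'a \<Rightarrow> 'a" where
  "te S m S0 x = (THE e. \<exists>f. transversal_factorisation S m S0 x (tbar S m S0 x) e f)"

definition tf :: "'a set \<Rightarrow> ('a \<Rightarrow> 'a \<Rightarrow> 'a) \<Rightarrow> 'a set \<Rightarrow> 'a \<Rightarrow> 'a" where
  "tf S m S0 x = (THE f. \<exists>e. transversal_factorisation S m S0 x (tbar S m S0 x) e f)"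

definition sg_iso :: "'a set \<Rightarrow> ('a \<Rightarrow> 'a \<Rightarrow> 'a) \<Rightarrow> 'b set \<Rightarrow> ('b \<Rightarrow> 'b \<Rightarrow> 'b) \<Rightarrow> ('a \<Rightarrow> 'b) \<Rightarrow> bool" where
  "sg_iso S m S' m' \<phi> \<longleftrightarrow> bij_betw \<phi> S S' \<and> (\<forall>a\<in>S. \<forall>b\<in>S. \<phi> (m a b) = m' (\<phi> a) (\<phi> b))"

text \<open>The data of the construction: L left adequate, R right adequate, S0 a common
  quasi-ideal adequate transversal (a common subsemigroup: the two operations agree on S0),
  and a map st : R x L -> S0 satisfying conditions (1) and (2).\<close>
definition construction_data ::
  "'a set \<Rightarrow> ('a \<Rightarrow> 'a \<Rightarrow> 'a) \<Rightarrow> 'a set \<Rightarrow> ('a \<Rightarrow> 'a \<Rightarrow> 'a) \<Rightarrow> 'a set \<Rightarrow> ('a \<Rightarrow> 'a \<Rightarrow> 'a) \<Rightarrow> bool" where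
  "construction_data L mL R mR S0 st \<longleftrightarrow>
     adequate S0 mL \<and>
     left_adequate L mL \<and> right_adequate R mR \<and>
     (\<forall>s\<in>S0. \<forall>t\<in>S0. mL s t = mR s t) \<and>
     qi_adequate_transversal L mL S0 \<and> qi_adequate_transversal R mR S0 \<and>
     (\<forall>a\<in>R. \<forall>x\<in>L. st a x \<in> S0) \<and>
     (\<forall>y\<in>L. \<forall>z\<in>L. \<forall>a\<in>R. \<forall>b\<in>R. tbar L mL S0 y = tbar R mR S0 b \<longrightarrow>
        st (mR (st a y) (tf R mR S0 b)) z = st a (mL (te L mL S0 y) (st b z))) \<and>
     (\<forall>a\<in>R. \<forall>x\<in>L. (a \<in> S0 \<longrightarrow> st a x = mL a x) \<and> (x \<in> S0 \<longrightarrow> st a x = mR a x))"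

definition T_set :: "'a set \<Rightarrow> ('a \<Rightarrow> 'a \<Rightarrow> 'a) \<Rightarrow> 'a set \<Rightarrow> ('a \<Rightarrow> 'a \<Rightarrow> 'a) \<Rightarrow> 'a set \<Rightarrow> ('a \<times> 'a) set" where
  "T_set L mL R mR S0 = {(x, a). x \<in> L \<and> a \<in> R \<and> tbar L mL S0 x = tbar R mR S0 a}"

definition T_mult ::
  "'a set \<Rightarrow> ('a \<Rightarrow> 'a \<Rightarrow> 'a) \<Rightarrow> 'a set \<Rightarrow> ('a \<Rightarrow> 'a \<Rightarrow> 'a) \<Rightarrow> 'a set \<Rightarrow> ('a \<Rightarrow> 'a \<Rightarrow> 'a)
     \<Rightarrow> ('a \<times> 'a) \<Rightarrow> ('a \<times> 'a) \<Rightarrow> ('a \<times> 'a)" where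
  "T_mult L mL R mR S0 st p q =
     (case p of (x, a) \<Rightarrow> case q of (y, b) \<Rightarrow>
        (mL (te L mL S0 x) (st a y), mR (st a y) (tf R mR S0 b)))"

definition T0_set :: "'a set \<Rightarrow> ('a \<times> 'a) set" where
  "T0_set S0 = {(s, s) | s. s \<in> S0}"

end

theory Submission
  imports Defs
begin

text \<open>
  For \<open>(x, a) \<in> T\<close> the idempotents \<open>(e\<^sub>x, x\<^sup>+)\<close> and \<open>(x\<^sup>*, f\<^sub>a)\<close> (with \<open>x\<^sup>+\<close>, \<open>x\<^sup>*\<close> computed
  from \<open>bar x\<close> in \<open>S\<^sup>0\<close>) are R*- resp. L*-related to \<open>(x, a)\<close>, and
  \<open>(x, a) = (e\<^sub>x, x\<^sup>+) (bar x, bar x) (x\<^sup>*, f\<^sub>a)\<close>.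
  Everything rests on two consequences of condition (1): \<open>b * x = (b * e\<^sub>x) bar x\<close> and
  \<open>a * y = bar a (f\<^sub>a * y)\<close>. They turn each product in \<open>T\<close> into a product in \<open>L\<close> or \<open>R\<close> with
  \<open>bar x\<close> as a factor, so cancellation in \<open>T\<close> reduces to the relations \<open>bar x R* x\<^sup>+\<close> and
  \<open>bar x L* x\<^sup>*\<close> in \<open>L\<close> and \<open>R\<close>; associativity is (1) itself.
  The factorisation is unique because an idempotent of \<open>T\<close> that is L-related to \<open>(p, p)\<close>,
  \<open>p \<in> E\<^sup>0\<close>, must be of the form \<open>(y, p)\<close> with \<open>y\<close> idempotent, and dually.

  Conversely, for a quasi-ideal adequate transversal \<open>S\<^sup>0\<close> of \<open>S\<close> take
  \<open>L = {x. x = e\<^sub>x bar x}\<close>, \<open>R = {a. a = bar a f\<^sub>a}\<close> and \<open>a * x = a x\<close>, which lies in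
  \<open>S\<^sup>0\<close> because \<open>S\<^sup>0\<close> is a quasi-ideal; then \<open>(x, a) \<mapsto> x f\<^sub>a\<close> is an isomorphism from
  \<open>T\<close> onto \<open>S\<close> mapping \<open>T\<^sup>0\<close> onto \<open>S\<^sup>0\<close>.
\<close>

lemma semigroup_on_closed: "semigroup_on S m \<Longrightarrow> a \<in> S \<Longrightarrow> b \<in> S \<Longrightarrow> m a b \<in> S"
  unfolding semigroup_on_def by blast

lemma semigroup_on_assoc:
  "semigroup_on S m \<Longrightarrow> a \<in> S \<Longrightarrow> b \<in> S \<Longrightarrow> c \<in> S \<Longrightarrow> m (m a b) c = m a (m b c)"
  unfolding semigroup_on_def by blast

lemma idemsD: "e \<in> idems S m \<Longrightarrow> e \<in> S \<and> m e e = e"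
  unfolding idems_def by blast

lemma idems_mono: "U \<subseteq> S \<Longrightarrow> idems U m \<subseteq> idems S m"
  unfolding idems_def by blast

subsection \<open>The relations R* and L*\<close>

lemma RstarI:
  assumes "a \<in> S" "b \<in> S"
    and "\<And>x y. x \<in> S \<Longrightarrow> y \<in> S \<Longrightarrow> m x a = m y a \<longleftrightarrow> m x b = m y b"
    and "\<And>x. x \<in> S \<Longrightarrow> m x a = a \<longleftrightarrow> m x b = b"
  shows "Rstar S m a b"
  unfolding Rstar_def using assms by blast

lemma LstarI:
  assumes "a \<in> S" "b \<in> S"
    and "\<And>x y. x \<in> S \<Longrightarrow> y \<in> S \<Longrightarrow> m a x = m a y \<longleftrightarrow> m b x = m b y"
    and "\<And>x. x \<in> S \<Longrightarrow> m a x = a \<longleftrightarrow> m b x = b"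
  shows "Lstar S m a b"
  unfolding Lstar_def using assms by blast

lemma Rstar_carrier: "Rstar S m a b \<Longrightarrow> a \<in> S \<and> b \<in> S"
  unfolding Rstar_def by blast

lemma Rstar_refl: "a \<in> S \<Longrightarrow> Rstar S m a a"
  unfolding Rstar_def by blast

lemma Rstar_sym: "Rstar S m a b \<Longrightarrow> Rstar S m b a"
  unfolding Rstar_def by blast

lemma Rstar_trans: "Rstar S m a b \<Longrightarrow> Rstar S m b c \<Longrightarrow> Rstar S m a c"
  unfolding Rstar_def by blast

lemma Rstar_restrict: "Rstar S m a b \<Longrightarrow> U \<subseteq> S \<Longrightarrow> a \<in> U \<Longrightarrow> b \<in> U \<Longrightarrow> Rstar U m a b"
  unfolding Rstar_def by blast

lemma Rstar_cancel_iff: "Rstar S m a b \<Longrightarrow> x \<in> S \<Longrightarrow> y \<in> S \<Longrightarrow> m x a = m y a \<longleftrightarrow> m x b = m y b"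
  unfolding Rstar_def by blast

lemma Rstar_cancel: "Rstar S m a b \<Longrightarrow> x \<in> S \<Longrightarrow> y \<in> S \<Longrightarrow> m x a = m y a \<Longrightarrow> m x b = m y b"
  unfolding Rstar_def by blast

lemma Rstar_cancel_fix: "Rstar S m a b \<Longrightarrow> x \<in> S \<Longrightarrow> m x a = a \<Longrightarrow> m x b = b"
  unfolding Rstar_def by blast

lemma Rstar_idem_unit: "Rstar S m a e \<Longrightarrow> e \<in> idems S m \<Longrightarrow> m e a = a"
  unfolding Rstar_def idems_def by blast

lemma Rstar_idems: "Rstar S m e f \<Longrightarrow> e \<in> idems S m \<Longrightarrow> f \<in> idems S m \<Longrightarrow> m e f = f \<and> m f e = e"
  using Rstar_idem_unit Rstar_sym by metis

lemma Rstar_mult_left: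
  assumes sg: "semigroup_on S m" and r: "Rstar S m a b" and c: "c \<in> S"
  shows "Rstar S m (m c a) (m c b)"
proof -
  have ab: "a \<in> S" "b \<in> S" using Rstar_carrier[OF r] by simp_all
  note assoc = semigroup_on_assoc[OF sg] and closed = semigroup_on_closed[OF sg]
  show ?thesis
  proof (rule RstarI)
    show "m c a \<in> S" "m c b \<in> S" using closed ab c by auto
  next
    fix x y assume xy: "x \<in> S" "y \<in> S"
    have "m x (m c a) = m y (m c a) \<longleftrightarrow> m (m x c) a = m (m y c) a" by (simp add: assoc xy c ab)
    also have "\<dots> \<longleftrightarrow> m (m x c) b = m (m y c) b" using Rstar_cancel_iff[OF r] closed xy c by simp
    also have "\<dots> \<longleftrightarrow> m x (m c b) = m y (m c b)" by (simp add: assoc xy c ab)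
    finally show "m x (m c a) = m y (m c a) \<longleftrightarrow> m x (m c b) = m y (m c b)" .
  next
    fix x assume x: "x \<in> S"
    have "m x (m c a) = m c a \<longleftrightarrow> m (m x c) a = m c a" by (simp add: assoc x c ab)
    also have "\<dots> \<longleftrightarrow> m (m x c) b = m c b" using Rstar_cancel_iff[OF r] closed x c by simp
    also have "\<dots> \<longleftrightarrow> m x (m c b) = m c b" by (simp add: assoc x c ab)
    finally show "m x (m c a) = m c a \<longleftrightarrow> m x (m c b) = m c b" .
  qed
qed

lemma right_associates_Rstar:
  assumes sg: "semigroup_on S m" and S: "a \<in> S" "u \<in> S" "v \<in> S" and b: "b = m a u" "a = m b v"
  shows "Rstar S m a b"
proof -
  note assoc = semigroup_on_assoc[OF sg]
  have bS: "b \<in> S" unfolding b(1) using S semigroup_on_closed[OF sg] by simp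
  show ?thesis
  proof (rule RstarI)
    fix x y assume xy: "x \<in> S" "y \<in> S"
    show "m x a = m y a \<longleftrightarrow> m x b = m y b"
    proof
      assume "m x a = m y a"
      then have "m (m x a) u = m (m y a) u" by simp
      then show "m x b = m y b" using b(1) by (simp add: assoc xy S)
    next
      assume "m x b = m y b"
      then have "m (m x b) v = m (m y b) v" by simp
      then show "m x a = m y a" using b(2) bS by (simp add: assoc xy S)
    qed
  next
    fix x assume x: "x \<in> S"
    show "m x a = a \<longleftrightarrow> m x b = b"
    proof
      assume "m x a = a"
      then have "m (m x a) u = m a u" by simp
      then show "m x b = b" using b(1) by (simp add: assoc x S)
    next
      assume "m x b = b"
      then have "m (m x b) v = m b v" by simp
      then show "m x a = a" using b(2) bS by (simp add: assoc x S)
    qed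
  qed (use S bS in auto)
qed

lemma GreenL_idems:
  assumes sg: "semigroup_on S m" and e: "e \<in> idems S m" and p: "p \<in> idems S m"
    and g: "GreenL S m e p"
  shows "m e p = e \<and> m p e = p"
proof -
  have eS: "e \<in> S" "m e e = e" and pS: "p \<in> S" "m p p = p" using idemsD[OF e] idemsD[OF p] by auto
  have "m e p = e"
  proof (cases "e = p")
    case False
    then obtain x where x: "x \<in> S" "e = m x p" using g unfolding GreenL_def by blast
    then show ?thesis using semigroup_on_assoc[OF sg x(1) pS(1) pS(1)] pS by simp
  qed (use pS in simp)
  moreover have "m p e = p"
  proof (cases "p = e")
    case False
    then obtain y where y: "y \<in> S" "p = m y e" using g unfolding GreenL_def by blast
    then show ?thesis using semigroup_on_assoc[OF sg y(1) eS(1) eS(1)] eS by simp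
  qed (use eS in simp)
  ultimately show ?thesis ..
qed

lemma GreenL_I: "a \<in> S \<Longrightarrow> b \<in> S \<Longrightarrow> m a b = a \<Longrightarrow> m b a = b \<Longrightarrow> GreenL S m a b"
  unfolding GreenL_def by metis

lemma GreenR_I: "a \<in> S \<Longrightarrow> b \<in> S \<Longrightarrow> m b a = a \<Longrightarrow> m a b = b \<Longrightarrow> GreenR S m a b"
  unfolding GreenR_def by metis

lemma GreenL_refl: "a \<in> S \<Longrightarrow> GreenL S m a a"
  unfolding GreenL_def by blast

lemma GreenR_refl: "a \<in> S \<Longrightarrow> GreenR S m a a"
  unfolding GreenR_def by blast

lemma GreenL_mono: "GreenL U m a b \<Longrightarrow> U \<subseteq> S \<Longrightarrow> GreenL S m a b"
  unfolding GreenL_def by blast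

lemma GreenR_mono: "GreenR U m a b \<Longrightarrow> U \<subseteq> S \<Longrightarrow> GreenR S m a b"
  unfolding GreenR_def by blast

subsection \<open>The opposite semigroup\<close>

lemma Rstar_opp: "Rstar S (\<lambda>a b. m b a) = Lstar S m"
  unfolding Rstar_def Lstar_def ..

lemma Lstar_opp: "Lstar S (\<lambda>a b. m b a) = Rstar S m"
  unfolding Rstar_def Lstar_def ..

lemma GreenL_opp: "GreenL S (\<lambda>a b. m b a) = GreenR S m"
  unfolding GreenL_def GreenR_def ..

lemma GreenR_opp: "GreenR S (\<lambda>a b. m b a) = GreenL S m"
  unfolding GreenL_def GreenR_def ..

lemma idems_opp: "idems S (\<lambda>a b. m b a) = idems S m"
  unfolding idems_def ..

lemma semigroup_on_opp_imp: "semigroup_on S m \<Longrightarrow> semigroup_on S (\<lambda>a b. m b a)"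
  unfolding semigroup_on_def by (intro conjI ballI) (simp_all add: Ball_def)

lemma semigroup_on_opp: "semigroup_on S (\<lambda>a b. m b a) = semigroup_on S m"
  using semigroup_on_opp_imp[of S m] semigroup_on_opp_imp[of S "\<lambda>a b. m b a"] by blast

lemma abundant_opp: "abundant S (\<lambda>a b. m b a) = abundant S m"
  unfolding abundant_def semigroup_on_opp[of S m] Rstar_opp[of S m] Lstar_opp[of S m]
    idems_opp[of S m]
  by blast

lemma adequate_opp: "adequate S (\<lambda>a b. m b a) = adequate S m"
  unfolding adequate_def abundant_opp[of S m] idems_opp[of S m] by blast

lemma left_adequate_opp: "left_adequate S (\<lambda>a b. m b a) = right_adequate S m"
  unfolding left_adequate_def right_adequate_def abundant_opp[of S m] Rstar_opp[of S m]
    idems_opp[of S m] ..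

lemma aplus_opp: "aplus S (\<lambda>a b. m b a) = astar S m"
  unfolding aplus_def astar_def Rstar_opp[of S m] idems_opp[of S m] ..

lemma astar_opp: "astar S (\<lambda>a b. m b a) = aplus S m"
  unfolding aplus_def astar_def Lstar_opp[of S m] idems_opp[of S m] ..

lemma adequate_star_subsemigroup_opp:
  "adequate_star_subsemigroup S (\<lambda>a b. m b a) U = adequate_star_subsemigroup S m U"
  unfolding adequate_star_subsemigroup_def adequate_opp[of U m] Rstar_opp[of S m] Lstar_opp[of S m]
    idems_opp[of U m]
  by blast

lemma Lstar_refl: "a \<in> S \<Longrightarrow> Lstar S m a a"
  unfolding Lstar_def by blast

lemma Lstar_restrict: "Lstar S m a b \<Longrightarrow> U \<subseteq> S \<Longrightarrow> a \<in> U \<Longrightarrow> b \<in> U \<Longrightarrow> Lstar U m a b"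
  unfolding Lstar_def by blast

lemma Lstar_cancel: "Lstar S m a b \<Longrightarrow> x \<in> S \<Longrightarrow> y \<in> S \<Longrightarrow> m a x = m a y \<Longrightarrow> m b x = m b y"
  unfolding Lstar_def by blast

lemma Lstar_cancel_fix: "Lstar S m a b \<Longrightarrow> x \<in> S \<Longrightarrow> m a x = a \<Longrightarrow> m b x = b"
  unfolding Lstar_def by blast

lemma Lstar_idem_unit: "Lstar S m a e \<Longrightarrow> e \<in> idems S m \<Longrightarrow> m a e = a"
  unfolding Lstar_def idems_def by blast

lemma GreenR_idems:
  assumes "semigroup_on S m" "e \<in> idems S m" "p \<in> idems S m" "GreenR S m e p"
  shows "m p e = e \<and> m e p = p"
  using GreenL_idems[of S "\<lambda>a b. m b a" e p] assms
  unfolding semigroup_on_opp[of S m] idems_opp[of S m] GreenL_opp[of S m] by blast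

subsection \<open>Distinguished idempotents in an adequate semigroup\<close>

lemma aplus_eqI:
  assumes comm: "\<forall>e\<in>idems U m. \<forall>f\<in>idems U m. m e f = m f e"
    and e: "e \<in> idems U m" and r: "Rstar U m s e"
  shows "aplus U m s = e"
  unfolding aplus_def
proof (rule the_equality)
  fix e' assume e': "e' \<in> idems U m \<and> Rstar U m s e'"
  then have "m e e' = e' \<and> m e' e = e"
    using Rstar_idems[OF Rstar_trans[OF Rstar_sym[OF r]] e] by blast
  then show "e' = e" using comm e e' by metis
qed (use e r in simp)

lemma astar_eqI:
  assumes comm: "\<forall>e\<in>idems U m. \<forall>f\<in>idems U m. m e f = m f e"
    and e: "e \<in> idems U m" and l: "Lstar U m s e"
  shows "astar U m s = e"
  using aplus_eqI[of U "\<lambda>a b. m b a" e s] assms unfolding aplus_opp[of U m] idems_opp[of U m]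
    Rstar_opp[of U m] by metis

lemma astar_cong:
  assumes "\<And>a b. a \<in> S \<Longrightarrow> b \<in> S \<Longrightarrow> m a b = m' a b"
  shows "astar S m = astar S m'"
proof
  fix a
  have "(e \<in> idems S m \<and> Lstar S m a e) = (e \<in> idems S m' \<and> Lstar S m' a e)" for e
    unfolding idems_def Lstar_def by (simp add: assms cong: conj_cong)
  then show "astar S m a = astar S m' a" unfolding astar_def by presburger
qed

subsection \<open>Adequate transversals\<close>

locale transversal =
  fixes S :: "'a set" and m :: "'a \<Rightarrow> 'a \<Rightarrow> 'a" and S0 :: "'a set"
  assumes transversal: "adequate_transversal S m S0"
begin

abbreviation "factor \<equiv> transversal_factorisation S m S0"

abbreviation "plus0 \<equiv> aplus S0 m"

abbreviation "star0 \<equiv> astar S0 m"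

abbreviation "bar \<equiv> tbar S m S0"

abbreviation "ee \<equiv> te S m S0"

abbreviation "ff \<equiv> tf S m S0"

lemma S_semigroup: "semigroup_on S m"
  using transversal unfolding adequate_transversal_def abundant_def by blast

lemma S_closed: "a \<in> S \<Longrightarrow> b \<in> S \<Longrightarrow> m a b \<in> S" using semigroup_on_closed[OF S_semigroup] .

lemma S_assoc: "a \<in> S \<Longrightarrow> b \<in> S \<Longrightarrow> c \<in> S \<Longrightarrow> m (m a b) c = m a (m b c)"
  using semigroup_on_assoc[OF S_semigroup] .

lemma S0_star_subsemigroup: "adequate_star_subsemigroup S m S0"
  using transversal unfolding adequate_transversal_def by blast

lemma S0_subset: "S0 \<subseteq> S"
  using S0_star_subsemigroup unfolding adequate_star_subsemigroup_def by blast

lemma S0_memD: "s \<in> S0 \<Longrightarrow> s \<in> S" using S0_subset by blast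

lemma S0_adequate: "adequate S0 m"
  using S0_star_subsemigroup unfolding adequate_star_subsemigroup_def by blast

lemma S0_closed: "a \<in> S0 \<Longrightarrow> b \<in> S0 \<Longrightarrow> m a b \<in> S0"
  using S0_adequate unfolding adequate_def abundant_def semigroup_on_def by blast

lemma idems0_commute: "\<forall>e\<in>idems S0 m. \<forall>f\<in>idems S0 m. m e f = m f e"
  using S0_adequate unfolding adequate_def by blast

lemma idems0_comm: "e \<in> idems S0 m \<Longrightarrow> f \<in> idems S0 m \<Longrightarrow> m e f = m f e"
  using idems0_commute by blast

lemma idems0_in_idems: "e \<in> idems S0 m \<Longrightarrow> e \<in> idems S m" using S0_subset unfolding idems_def by blast

lemma idems_memD: "e \<in> idems S m \<Longrightarrow> e \<in> S" unfolding idems_def by blast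

lemma idems_sq: "e \<in> idems S m \<Longrightarrow> m e e = e" unfolding idems_def by blast

lemma idems0_memD: "e \<in> idems S0 m \<Longrightarrow> e \<in> S0" unfolding idems_def by blast

lemma idems0_sq: "e \<in> idems S0 m \<Longrightarrow> m e e = e" unfolding idems_def by blast

lemma idemsI: "e \<in> S \<Longrightarrow> m e e = e \<Longrightarrow> e \<in> idems S m" unfolding idems_def by blast

lemma plus0_spec: assumes "s \<in> S0" shows "plus0 s \<in> idems S0 m \<and> Rstar S m s (plus0 s)"
proof -
  obtain e where e: "e \<in> idems S0 m" "Rstar S m s e"
    using S0_star_subsemigroup assms unfolding adequate_star_subsemigroup_def by blast
  have "e \<in> S0" using idems0_memD[OF e(1)] .
  then have "Rstar S0 m s e" using Rstar_restrict[OF e(2) S0_subset assms] by simp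
  then have "plus0 s = e" using aplus_eqI[OF idems0_commute e(1)] by simp
  then show ?thesis using e by simp
qed

lemma plus0_idem: "s \<in> S0 \<Longrightarrow> plus0 s \<in> idems S0 m" using plus0_spec by blast

lemma plus0_Rstar: "s \<in> S0 \<Longrightarrow> Rstar S m s (plus0 s)" using plus0_spec by blast

lemma plus0_S0: "s \<in> S0 \<Longrightarrow> plus0 s \<in> S0" using idems0_memD[OF plus0_idem] .

lemma plus0_S: "s \<in> S0 \<Longrightarrow> plus0 s \<in> S" using S0_memD[OF plus0_S0] .

lemma plus0_sq: "s \<in> S0 \<Longrightarrow> m (plus0 s) (plus0 s) = plus0 s" using idems0_sq[OF plus0_idem] .

lemma plus0_left_unit: "s \<in> S0 \<Longrightarrow> m (plus0 s) s = s"
  using Rstar_idem_unit[OF plus0_Rstar idems0_in_idems[OF plus0_idem]] .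

lemma plus0_of_idem: "e \<in> idems S0 m \<Longrightarrow> plus0 e = e"
  using aplus_eqI[OF idems0_commute _ Rstar_refl[OF idems0_memD]] by blast

lemma factor_opp_iff: "transversal_factorisation S (\<lambda>a b. m b a) S0 x xb f e \<longleftrightarrow> factor x xb e f"
proof -
  have A: "transversal_factorisation S (\<lambda>a b. m b a) S0 x xb f e \<longleftrightarrow>
     (xb \<in> S0 \<and> f \<in> idems S m \<and> e \<in> idems S m \<and> x = m e (m xb f) \<and>
      GreenR S m f (star0 xb) \<and> GreenL S m e (plus0 xb))"
    unfolding transversal_factorisation_def
    by (simp only: idems_opp[of S m] GreenL_opp[of S m] GreenR_opp[of S m] aplus_opp[of S0 m] astar_opp[of S0 m])
  have B: "m e (m xb f) = m (m e xb) f" if "xb \<in> S0" "e \<in> idems S m" "f \<in> idems S m"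
    using S_assoc[OF idems_memD[OF that(2)] S0_memD[OF that(1)] idems_memD[OF that(3)]] by simp
  have C: "factor x xb e f \<longleftrightarrow> (xb \<in> S0 \<and> e \<in> idems S m \<and> f \<in> idems S m \<and> x = m (m e xb) f \<and>
      GreenL S m e (plus0 xb) \<and> GreenR S m f (star0 xb))"
    unfolding transversal_factorisation_def by (rule refl)
  show ?thesis unfolding A C using B by auto
qed

lemma transversal_opp: "transversal S (\<lambda>a b. m b a) S0"
proof
  have u: "\<forall>x\<in>S. \<exists>!xb. \<exists>e f. factor x xb e f"
    using transversal unfolding adequate_transversal_def by blast
  have "\<exists>!xb. \<exists>e f. transversal_factorisation S (\<lambda>a b. m b a) S0 x xb e f" if x: "x \<in> S" for x
  proof -
    obtain xb where xb: "\<exists>e f. factor x xb e f" and un: "\<And>y. (\<exists>e f. factor x y e f) \<Longrightarrow> y = xb"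
      using u x by metis
    show ?thesis
    proof (rule ex1I[of _ xb])
      show "\<exists>e f. transversal_factorisation S (\<lambda>a b. m b a) S0 x xb e f"
        using xb factor_opp_iff by blast
      fix y assume "\<exists>e f. transversal_factorisation S (\<lambda>a b. m b a) S0 x y e f"
      then have "\<exists>e f. factor x y e f" using factor_opp_iff by blast
      then show "y = xb" using un by blast
    qed
  qed
  then show "adequate_transversal S (\<lambda>a b. m b a) S0"
    using transversal unfolding adequate_transversal_def abundant_opp[of S m]
      adequate_star_subsemigroup_opp[of S m S0] by blast
qed

lemma tbar_opp: "tbar S (\<lambda>a b. m b a) S0 = bar"
proof
  fix x
  have "(\<lambda>xb. \<exists>e f. transversal_factorisation S (\<lambda>a b. m b a) S0 x xb e f) = (\<lambda>xb. \<exists>e f. factor x xb e f)"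
    using factor_opp_iff by blast
  then show "tbar S (\<lambda>a b. m b a) S0 x = bar x" unfolding tbar_def by simp
qed

lemma te_opp: "te S (\<lambda>a b. m b a) S0 = ff"
proof
  fix x
  have "(\<lambda>e. \<exists>f. transversal_factorisation S (\<lambda>a b. m b a) S0 x (bar x) e f) = (\<lambda>e. \<exists>f. factor x (bar x) f e)"
    using factor_opp_iff by blast
  then show "te S (\<lambda>a b. m b a) S0 x = ff x" unfolding te_def tf_def tbar_opp by simp
qed

lemma tf_opp: "tf S (\<lambda>a b. m b a) S0 = ee"
proof
  fix x
  have "(\<lambda>f. \<exists>e. transversal_factorisation S (\<lambda>a b. m b a) S0 x (bar x) e f) = (\<lambda>f. \<exists>e. factor x (bar x) f e)"
    using factor_opp_iff by blast
  then show "tf S (\<lambda>a b. m b a) S0 x = ee x" unfolding te_def tf_def tbar_opp by simp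
qed

lemma star0_spec: assumes s: "s \<in> S0" shows "star0 s \<in> idems S0 m \<and> Lstar S m s (star0 s)"
proof -
  interpret D: transversal S "\<lambda>a b. m b a" S0 by (rule transversal_opp)
  show ?thesis
    using D.plus0_spec[OF s]
    by (simp only: aplus_opp[of S0 m] idems_opp[of S0 m] Rstar_opp[of S m])
qed

lemma star0_idem: "s \<in> S0 \<Longrightarrow> star0 s \<in> idems S0 m" using star0_spec by blast

lemma star0_Lstar: "s \<in> S0 \<Longrightarrow> Lstar S m s (star0 s)" using star0_spec by blast

lemma star0_S0: "s \<in> S0 \<Longrightarrow> star0 s \<in> S0" using idems0_memD[OF star0_idem] .

lemma star0_S: "s \<in> S0 \<Longrightarrow> star0 s \<in> S" using S0_memD[OF star0_S0] .

lemma star0_sq: "s \<in> S0 \<Longrightarrow> m (star0 s) (star0 s) = star0 s" using idems0_sq[OF star0_idem] .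

lemma star0_right_unit: "s \<in> S0 \<Longrightarrow> m s (star0 s) = s"
  using Lstar_idem_unit[OF star0_Lstar idems0_in_idems[OF star0_idem]] .

lemma star0_of_idem: "e \<in> idems S0 m \<Longrightarrow> star0 e = e"
  using astar_eqI[OF idems0_commute _ Lstar_refl[OF idems0_memD]] by blast

lemma factorD: "factor x xb e f \<Longrightarrow> xb \<in> S0 \<and> e \<in> idems S m \<and> f \<in> idems S m \<and> x = m (m e xb) f"
  unfolding transversal_factorisation_def by blast

lemma factor_e_GreenL: "factor x xb e f \<Longrightarrow> m e (plus0 xb) = e \<and> m (plus0 xb) e = plus0 xb"
  unfolding transversal_factorisation_def
  using GreenL_idems[OF S_semigroup] idems0_in_idems[OF plus0_idem] by blast

lemma factor_f_GreenR: "factor x xb e f \<Longrightarrow> m (star0 xb) f = f \<and> m f (star0 xb) = star0 xb"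
  unfolding transversal_factorisation_def
  using GreenR_idems[OF S_semigroup] idems0_in_idems[OF star0_idem] by blast

lemma factor_mem: "factor x xb e f \<Longrightarrow> x \<in> S"
proof -
  assume a: "factor x xb e f"
  then have "xb \<in> S0" "e \<in> S" "f \<in> S" "x = m (m e xb) f" using factorD idems_memD by blast+
  then show "x \<in> S" using S_closed S0_memD by metis
qed

lemma factor_Rstar: assumes a: "factor x xb e f" shows "Rstar S m x e"
proof -
  have i: "xb \<in> S0" "e \<in> idems S m" "f \<in> idems S m" "x = m (m e xb) f" using factorD[OF a] by auto
  have eS: "e \<in> S" "f \<in> S" "xb \<in> S" using idems_memD i S0_memD by auto
  have gl: "m e (plus0 xb) = e" using factor_e_GreenL[OF a] by blast
  have gr: "m f (star0 xb) = star0 xb" using factor_f_GreenR[OF a] by blast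
  have r1: "Rstar S m (m e xb) (m e (plus0 xb))"
    using Rstar_mult_left[OF S_semigroup plus0_Rstar[OF i(1)] eS(1)] .
  have exS: "m e xb \<in> S" using S_closed eS by simp
  have "m x (star0 xb) = m (m e xb) (m f (star0 xb))"
    using i(4) S_assoc[OF exS eS(2) star0_S[OF i(1)]] by simp
  also have "\<dots> = m e (m xb (star0 xb))" using gr S_assoc[OF eS(1) eS(3) star0_S[OF i(1)]] by simp
  also have "\<dots> = m e xb" using star0_right_unit[OF i(1)] by simp
  finally have x1: "m e xb = m x (star0 xb)" by simp
  have r2: "Rstar S m x (m e xb)"
    using right_associates_Rstar[OF S_semigroup factor_mem[OF a] star0_S[OF i(1)] eS(2) x1 i(4)] .
  show ?thesis using Rstar_trans[OF r2] r1 gl by simp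
qed

lemma factor_Lstar: assumes a: "factor x xb e f" shows "Lstar S m x f"
proof -
  interpret D: transversal S "\<lambda>a b. m b a" S0 by (rule transversal_opp)
  have "transversal_factorisation S (\<lambda>a b. m b a) S0 x xb f e" using a factor_opp_iff by blast
  from D.factor_Rstar[OF this] show ?thesis by (simp only: Rstar_opp[of S m])
qed

lemma factor_unique_bar: "factor x xb e f \<Longrightarrow> factor x xb' e' f' \<Longrightarrow> xb' = xb"
proof -
  assume a: "factor x xb e f" and b: "factor x xb' e' f'"
  have u: "\<forall>x\<in>S. \<exists>!xb. \<exists>e f. factor x xb e f"
    using transversal unfolding adequate_transversal_def by blast
  then show ?thesis using a b factor_mem[OF a] by blast
qed

lemma factor_unique_e: assumes a: "factor x xb e f" and b: "factor x xb e' f'" shows "e' = e"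
proof -
  have ie: "e \<in> idems S m" "e' \<in> idems S m" using factorD a b by blast+
  have ee': "Rstar S m e e'"
    using Rstar_trans[OF Rstar_sym[OF factor_Rstar[OF a]] factor_Rstar[OF b]] .
  have r: "m e e' = e'" using Rstar_idems[OF ee' ie(1) ie(2)] by blast
  have g1: "m e (plus0 xb) = e" using factor_e_GreenL[OF a] by blast
  have g2: "m (plus0 xb) e' = plus0 xb" using factor_e_GreenL[OF b] by blast
  have xb: "xb \<in> S0" using factorD[OF a] by blast
  have "e' = m (m e (plus0 xb)) e'" using r g1 by simp
  also have "\<dots> = m e (m (plus0 xb) e')"
    using S_assoc[OF idems_memD[OF ie(1)] plus0_S[OF xb] idems_memD[OF ie(2)]] .
  also have "\<dots> = e" using g1 g2 by simp
  finally show ?thesis .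
qed

lemma factor_unique_f: assumes a: "factor x xb e f" and b: "factor x xb e' f'" shows "f' = f"
proof -
  interpret D: transversal S "\<lambda>a b. m b a" S0 by (rule transversal_opp)
  have a': "transversal_factorisation S (\<lambda>a b. m b a) S0 x xb f e" using a factor_opp_iff by blast
  have b': "transversal_factorisation S (\<lambda>a b. m b a) S0 x xb f' e'" using b factor_opp_iff by blast
  show ?thesis using D.factor_unique_e[OF a' b'] .
qed

lemma factor_bar: assumes a: "factor x xb e f" shows "bar x = xb"
  unfolding tbar_def
proof (rule the_equality)
  show "\<exists>e f. factor x xb e f" using a by blast
  fix y assume "\<exists>e f. factor x y e f"
  then show "y = xb" using factor_unique_bar[OF a] by blast
qed

lemma factor_ee: assumes a: "factor x xb e f" shows "ee x = e"
  unfolding te_def factor_bar[OF a]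
proof (rule the_equality)
  show "\<exists>f. factor x xb e f" using a by blast
  fix y assume "\<exists>f. factor x xb y f"
  then show "y = e" using factor_unique_e[OF a] by blast
qed

lemma factor_ff: assumes a: "factor x xb e f" shows "ff x = f"
  unfolding tf_def factor_bar[OF a]
proof (rule the_equality)
  show "\<exists>e. factor x xb e f" using a by blast
  fix y assume "\<exists>e. factor x xb e y"
  then show "y = f" using factor_unique_f[OF a] by blast
qed

lemma factor_components: "factor x xb e f \<Longrightarrow> bar x = xb \<and> ee x = e \<and> ff x = f"
  using factor_bar factor_ee factor_ff by blast

lemma factor_canonical: assumes x: "x \<in> S" shows "factor x (bar x) (ee x) (ff x)"
proof -
  obtain xb e f where "factor x xb e f"
    using transversal x unfolding adequate_transversal_def by blast
  then show ?thesis using factor_components by metis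
qed

lemma bar_S0: "x \<in> S \<Longrightarrow> bar x \<in> S0" using factorD[OF factor_canonical] by blast

lemma bar_S: "x \<in> S \<Longrightarrow> bar x \<in> S" using S0_memD[OF bar_S0] .

lemma ee_idem: "x \<in> S \<Longrightarrow> ee x \<in> idems S m" using factorD[OF factor_canonical] by blast

lemma ff_idem: "x \<in> S \<Longrightarrow> ff x \<in> idems S m" using factorD[OF factor_canonical] by blast

lemma ee_S: "x \<in> S \<Longrightarrow> ee x \<in> S" using idems_memD[OF ee_idem] .

lemma ff_S: "x \<in> S \<Longrightarrow> ff x \<in> S" using idems_memD[OF ff_idem] .

lemma canonical_eq: "x \<in> S \<Longrightarrow> m (m (ee x) (bar x)) (ff x) = x"
  using factorD[OF factor_canonical] by metis

lemma ee_plus0: "x \<in> S \<Longrightarrow> m (ee x) (plus0 (bar x)) = ee x"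
  using factor_e_GreenL[OF factor_canonical] by blast

lemma plus0_ee: "x \<in> S \<Longrightarrow> m (plus0 (bar x)) (ee x) = plus0 (bar x)"
  using factor_e_GreenL[OF factor_canonical] by blast

lemma star0_ff: "x \<in> S \<Longrightarrow> m (star0 (bar x)) (ff x) = ff x"
  using factor_f_GreenR[OF factor_canonical] by blast

lemma ff_star0: "x \<in> S \<Longrightarrow> m (ff x) (star0 (bar x)) = star0 (bar x)"
  using factor_f_GreenR[OF factor_canonical] by blast

lemma Rstar_ee: "x \<in> S \<Longrightarrow> Rstar S m x (ee x)" using factor_Rstar[OF factor_canonical] .

lemma Lstar_ff: "x \<in> S \<Longrightarrow> Lstar S m x (ff x)" using factor_Lstar[OF factor_canonical] .

lemma ee_GL: "x \<in> S \<Longrightarrow> GreenL S m (ee x) (plus0 (bar x))"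
  using GreenL_I ee_plus0 plus0_ee ee_S plus0_S bar_S0 by metis

lemma ff_GR: "x \<in> S \<Longrightarrow> GreenR S m (ff x) (star0 (bar x))"
  using GreenR_I star0_ff ff_star0 ff_S star0_S bar_S0 by metis

lemma factor_S0: assumes s: "s \<in> S0" shows "factor s s (plus0 s) (star0 s)"
  unfolding transversal_factorisation_def
  using s idems0_in_idems[OF plus0_idem[OF s]] idems0_in_idems[OF star0_idem[OF s]]
    plus0_left_unit[OF s] star0_right_unit[OF s]
    GreenL_refl[OF plus0_S[OF s]] GreenR_refl[OF star0_S[OF s]] by simp

lemma bar_of_S0: "s \<in> S0 \<Longrightarrow> bar s = s" using factor_components[OF factor_S0] by blast

lemma ee_of_S0: "s \<in> S0 \<Longrightarrow> ee s = plus0 s" using factor_components[OF factor_S0] by blast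

lemma ff_of_S0: "s \<in> S0 \<Longrightarrow> ff s = star0 s" using factor_components[OF factor_S0] by blast

lemma factor_idem_mult: assumes g: "g \<in> idems S m" and p: "p \<in> idems S0 m" and gl: "GreenL S m g p"
  and u: "u \<in> S0" and pu: "m p u = u"
  shows "factor (m g u) u (m g (plus0 u)) (star0 u)"
proof -
  have gS: "g \<in> S" using idems_memD[OF g] .
  have pS: "p \<in> S" using S0_memD idems0_memD[OF p] by blast
  have uS: "u \<in> S" using S0_memD[OF u] .
  have plS: "plus0 u \<in> S" using plus0_S[OF u] .
  have gp: "m g p = g" and pg: "m p g = p"
    using GreenL_idems[OF S_semigroup g idems0_in_idems[OF p] gl] by auto
  have ppl: "m p (plus0 u) = plus0 u" using Rstar_cancel_fix[OF plus0_Rstar[OF u] pS pu] .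
  have plp: "m (plus0 u) p = plus0 u" using ppl idems0_comm[OF p plus0_idem[OF u]] by simp
  have plg: "m (plus0 u) g = plus0 u"
  proof -
    have "m (plus0 u) g = m (m (plus0 u) p) g" using plp by simp
    also have "\<dots> = m (plus0 u) (m p g)" using S_assoc[OF plS pS gS] .
    also have "\<dots> = plus0 u" using pg plp by simp
    finally show ?thesis .
  qed
  have gplS: "m g (plus0 u) \<in> S" using S_closed[OF gS plS] .
  have idem: "m (m g (plus0 u)) (m g (plus0 u)) = m g (plus0 u)"
  proof -
    have "m (m g (plus0 u)) (m g (plus0 u)) = m g (m (plus0 u) (m g (plus0 u)))"
      using S_assoc[OF gS plS gplS] .
    also have "\<dots> = m g (m (m (plus0 u) g) (plus0 u))" using S_assoc[OF plS gS plS] by simp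
    also have "\<dots> = m g (plus0 u)" using plg plus0_sq[OF u] by simp
    finally show ?thesis .
  qed
  have e1: "m (m (m g (plus0 u)) u) (star0 u) = m g u"
  proof -
    have "m (m (m g (plus0 u)) u) (star0 u) = m (m g (plus0 u)) (m u (star0 u))"
      using S_assoc[OF gplS uS star0_S[OF u]] .
    also have "\<dots> = m (m g (plus0 u)) u" using star0_right_unit[OF u] by simp
    also have "\<dots> = m g (m (plus0 u) u)" using S_assoc[OF gS plS uS] .
    also have "\<dots> = m g u" using plus0_left_unit[OF u] by simp
    finally show ?thesis .
  qed
  have GL: "GreenL S m (m g (plus0 u)) (plus0 u)"
  proof -
    have "m (plus0 u) (m g (plus0 u)) = plus0 u"
      using S_assoc[OF plS gS plS, symmetric] plg plus0_sq[OF u] by simp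
    then show ?thesis using GreenL_I[OF gplS plS] S_assoc[OF gS plS plS] plus0_sq[OF u] by simp
  qed
  show ?thesis unfolding transversal_factorisation_def
    using u idemsI[OF gplS idem] idems0_in_idems[OF star0_idem[OF u]] e1 GL
      plus0_of_idem[OF plus0_idem[OF u]]
      GreenR_refl[OF star0_S[OF u]] by simp
qed

lemma components_idem_mult:
  assumes "g \<in> idems S m" "p \<in> idems S0 m" "GreenL S m g p" "u \<in> S0" "m p u = u"
  shows "bar (m g u) = u \<and> ee (m g u) = m g (plus0 u) \<and> ff (m g u) = star0 u"
  using factor_components[OF factor_idem_mult[OF assms]] .

lemma factor_mult_idem: assumes f: "f \<in> idems S m" and q: "q \<in> idems S0 m" and gr: "GreenR S m f q"
  and u: "u \<in> S0" and uq: "m u q = u"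
  shows "factor (m u f) u (plus0 u) (m (star0 u) f)"
proof -
  interpret D: transversal S "\<lambda>a b. m b a" S0 by (rule transversal_opp)
  have f': "f \<in> idems S (\<lambda>a b. m b a)" using f by (simp only: idems_opp[of S m])
  have q': "q \<in> idems S0 (\<lambda>a b. m b a)" using q by (simp only: idems_opp[of S0 m])
  have gr': "GreenL S (\<lambda>a b. m b a) f q" using gr by (simp only: GreenL_opp[of S m])
  have "transversal_factorisation S (\<lambda>a b. m b a) S0 (m u f) u (m (star0 u) f) (plus0 u)"
    using D.factor_idem_mult[OF f' q' gr' u] uq
    by (simp only: aplus_opp[of S0 m] astar_opp[of S0 m])
  then show ?thesis using factor_opp_iff by blast
qed

lemma components_mult_idem:
  assumes "f \<in> idems S m" "q \<in> idems S0 m" "GreenR S m f q" "u \<in> S0" "m u q = u"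
  shows "bar (m u f) = u \<and> ee (m u f) = plus0 u \<and> ff (m u f) = m (star0 u) f"
  using factor_components[OF factor_mult_idem[OF assms]] .

lemma factor_GreenL_idem:
  assumes g: "g \<in> idems S m" and p: "p \<in> idems S0 m" and gl: "GreenL S m g p"
  shows "factor g p g p"
proof -
  have gp: "m g p = g" using GreenL_idems[OF S_semigroup g idems0_in_idems[OF p] gl] by blast
  have "factor (m g p) p (m g (plus0 p)) (star0 p)"
    using factor_idem_mult[OF g p gl idems0_memD[OF p] idems0_sq[OF p]] .
  then show ?thesis using gp plus0_of_idem[OF p] star0_of_idem[OF p] by simp
qed

lemma factor_GreenR_idem:
  assumes f: "f \<in> idems S m" and q: "q \<in> idems S0 m" and gr: "GreenR S m f q"
  shows "factor f q q f"
proof -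
  have fq: "m q f = f" using GreenR_idems[OF S_semigroup f idems0_in_idems[OF q] gr] by blast
  have "factor (m q f) q (plus0 q) (m (star0 q) f)"
    using factor_mult_idem[OF f q gr idems0_memD[OF q] idems0_sq[OF q]] .
  then show ?thesis using fq plus0_of_idem[OF q] star0_of_idem[OF q] by simp
qed

lemma factor_of_ee: assumes x: "x \<in> S" shows "factor (ee x) (plus0 (bar x)) (ee x) (plus0 (bar x))"
  using factor_GreenL_idem[OF ee_idem[OF x] plus0_idem[OF bar_S0[OF x]] ee_GL[OF x]] .

lemma factor_of_ff: assumes x: "x \<in> S" shows "factor (ff x) (star0 (bar x)) (star0 (bar x)) (ff x)"
  using factor_GreenR_idem[OF ff_idem[OF x] star0_idem[OF bar_S0[OF x]] ff_GR[OF x]] .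

lemma factor_mono:
  assumes U: "U \<subseteq> S" and t: "transversal_factorisation U m S0 x xb e f"
  shows "factor x xb e f"
proof -
  have a: "xb \<in> S0" "e \<in> idems U m" "f \<in> idems U m" "x = m (m e xb) f"
    "GreenL U m e (plus0 xb)" "GreenR U m f (star0 xb)"
      using t unfolding transversal_factorisation_def by auto
  have "e \<in> idems S m" "f \<in> idems S m" using idems_mono[OF U] a(2,3) by auto
  moreover have "GreenL S m e (plus0 xb)" using GreenL_mono[OF a(5) U] .
  moreover have "GreenR S m f (star0 xb)" using GreenR_mono[OF a(6) U] .
  ultimately show ?thesis unfolding transversal_factorisation_def using a(1,4) by simp
qed

lemma components_subset: assumes U: "U \<subseteq> S" and t: "transversal_factorisation U m S0 x xb e f"
  shows "tbar U m S0 x = xb \<and> te U m S0 x = e \<and> tf U m S0 x = f"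
proof -
  have f: "factor x xb e f" using factor_mono[OF U t] .
  have u: "xb' = xb \<and> e' = e \<and> f' = f" if "transversal_factorisation U m S0 x xb' e' f'" for xb' e' f'
  proof -
    have f': "factor x xb' e' f'" using factor_mono[OF U that] .
    have "xb' = xb" using factor_unique_bar[OF f f'] .
    then show ?thesis using factor_unique_e[OF f] factor_unique_f[OF f] f' by blast
  qed
  have b: "tbar U m S0 x = xb" unfolding tbar_def
    by (rule the_equality) (use t u in blast)+
  have e: "te U m S0 x = e" unfolding te_def b
    by (rule the_equality) (use t u in blast)+
  have ff: "tf U m S0 x = f" unfolding tf_def b
    by (rule the_equality) (use t u in blast)+
  show ?thesis using b e ff by blast
qed

end

locale left_transversal = transversal + assumes S_left_adequate: "left_adequate S m"
begin

lemma Rstar_idem_unique: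
  assumes "a \<in> S" "e \<in> idems S m" "e' \<in> idems S m" "Rstar S m a e" "Rstar S m a e'"
  shows "e = e'"
proof -
  have "\<forall>a\<in>S. \<exists>!e. e \<in> idems S m \<and> Rstar S m a e"
    using S_left_adequate unfolding left_adequate_def by (rule conjunct2)
  then have "\<exists>!e. e \<in> idems S m \<and> Rstar S m a e" using assms(1) by (rule bspec)
  then obtain e0 where "\<forall>y. y \<in> idems S m \<and> Rstar S m a y \<longrightarrow> y = e0" by blast
  then show ?thesis using assms(2-5) by metis
qed

lemma ff_eq_star0: assumes x: "x \<in> S" shows "ff x = star0 (bar x)"
proof -
  have q: "star0 (bar x) \<in> idems S m" using idems0_in_idems[OF star0_idem[OF bar_S0[OF x]]] .
  have qS: "star0 (bar x) \<in> S" using idems_memD[OF q] .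
  have r: "Rstar S m (star0 (bar x)) (ff x)"
    using
      right_associates_Rstar[OF S_semigroup qS ff_S[OF x] qS star0_ff[OF x, symmetric] ff_star0[OF x, symmetric]]
      .
  show ?thesis using Rstar_idem_unique[OF qS ff_idem[OF x] q r Rstar_refl[OF qS]] .
qed

lemma ee_bar_eq: assumes x: "x \<in> S" shows "m (ee x) (bar x) = x"
proof -
  have "x = m (m (ee x) (bar x)) (star0 (bar x))" using canonical_eq[OF x] ff_eq_star0[OF x] by simp
  also have "\<dots> = m (ee x) (m (bar x) (star0 (bar x)))"
    using S_assoc[OF ee_S[OF x] bar_S[OF x] star0_S[OF bar_S0[OF x]]] .
  also have "\<dots> = m (ee x) (bar x)" using star0_right_unit[OF bar_S0[OF x]] by simp
  finally show ?thesis by simp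
qed

lemma ee_of_idem: assumes y: "y \<in> idems S m" shows "ee y = y"
proof -
  have yS: "y \<in> S" using idems_memD[OF y] .
  show ?thesis using Rstar_idem_unique[OF yS ee_idem[OF yS] y Rstar_ee[OF yS] Rstar_refl[OF yS]] .
qed

lemma bar_of_idem_plus0: assumes y: "y \<in> idems S m" shows "bar y = plus0 (bar y)"
proof -
  have yS: "y \<in> S" using idems_memD[OF y] .
  have "bar (ee y) = plus0 (bar y)" using factor_components[OF factor_of_ee[OF yS]] by blast
  then show ?thesis using ee_of_idem[OF y] by simp
qed

end

locale right_transversal = transversal + assumes S_right_adequate: "right_adequate S m"
begin

lemma left_transversal_opp: "left_transversal S (\<lambda>a b. m b a) S0"
proof -
  interpret D: transversal S "\<lambda>a b. m b a" S0 by (rule transversal_opp)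
  show ?thesis by unfold_locales (simp only: left_adequate_opp[of S m] S_right_adequate)
qed

lemma bar_ff_eq: assumes x: "x \<in> S" shows "m (bar x) (ff x) = x"
proof -
  interpret D: left_transversal S "\<lambda>a b. m b a" S0 by (rule left_transversal_opp)
  show ?thesis using D.ee_bar_eq[OF x] by (simp only: te_opp tbar_opp)
qed

lemma ff_of_idem: assumes y: "y \<in> idems S m" shows "ff y = y"
proof -
  interpret D: left_transversal S "\<lambda>a b. m b a" S0 by (rule left_transversal_opp)
  have y': "y \<in> idems S (\<lambda>a b. m b a)" using y by (simp only: idems_opp[of S m])
  show ?thesis using D.ee_of_idem[OF y'] by (simp only: te_opp)
qed

lemma bar_of_idem_star0: assumes y: "y \<in> idems S m" shows "bar y = star0 (bar y)"
proof -
  interpret D: left_transversal S "\<lambda>a b. m b a" S0 by (rule left_transversal_opp)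
  have y': "y \<in> idems S (\<lambda>a b. m b a)" using y by (simp only: idems_opp[of S m])
  show ?thesis using D.bar_of_idem_plus0[OF y'] by (simp only: tbar_opp aplus_opp[of S0 m])
qed

end

subsection \<open>The semigroup \<open>T\<close>\<close>

locale construction =
  fixes L :: "'a set" and mL :: "'a \<Rightarrow> 'a \<Rightarrow> 'a" and R :: "'a set" and mR :: "'a \<Rightarrow> 'a \<Rightarrow> 'a"
    and S0 :: "'a set" and st :: "'a \<Rightarrow> 'a \<Rightarrow> 'a"
  assumes data: "construction_data L mL R mR S0 st"
begin

lemma L_left_adequate: "left_adequate L mL" using data unfolding construction_data_def by blast

lemma R_right_adequate: "right_adequate R mR" using data unfolding construction_data_def by blast

lemma mult_agree_S0: "\<forall>s\<in>S0. \<forall>t\<in>S0. mL s t = mR s t"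
  using data unfolding construction_data_def by blast

lemma L_qi_transversal: "qi_adequate_transversal L mL S0"
  using data unfolding construction_data_def by blast

lemma R_qi_transversal: "qi_adequate_transversal R mR S0"
  using data unfolding construction_data_def by blast

lemma st_S0: "a \<in> R \<Longrightarrow> x \<in> L \<Longrightarrow> st a x \<in> S0" using data unfolding construction_data_def by blast

lemma st_assoc: "y \<in> L \<Longrightarrow> z \<in> L \<Longrightarrow> a \<in> R \<Longrightarrow> b \<in> R \<Longrightarrow> tbar L mL S0 y = tbar R mR S0 b \<Longrightarrow>
   st (mR (st a y) (tf R mR S0 b)) z = st a (mL (te L mL S0 y) (st b z))"
  using data unfolding construction_data_def by blast

lemma st_S0_left: "a \<in> R \<Longrightarrow> x \<in> L \<Longrightarrow> a \<in> S0 \<Longrightarrow> st a x = mL a x"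
  using data unfolding construction_data_def by blast

lemma st_S0_right: "a \<in> R \<Longrightarrow> x \<in> L \<Longrightarrow> x \<in> S0 \<Longrightarrow> st a x = mR a x"
  using data unfolding construction_data_def by blast

sublocale LT: left_transversal L mL S0
  using L_qi_transversal L_left_adequate unfolding qi_adequate_transversal_def
  by unfold_locales blast+

sublocale RT: right_transversal R mR S0
  using R_qi_transversal R_right_adequate unfolding qi_adequate_transversal_def
  by unfold_locales blast+

abbreviation "bL \<equiv> tbar L mL S0"

abbreviation "eL \<equiv> te L mL S0"

abbreviation "fL \<equiv> tf L mL S0"

abbreviation "bR \<equiv> tbar R mR S0"

abbreviation "eR \<equiv> te R mR S0"

abbreviation "fR \<equiv> tf R mR S0"

abbreviation "plus0 \<equiv> aplus S0 mL"

abbreviation "star0 \<equiv> astar S0 mL"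

lemma mult_agree: "s \<in> S0 \<Longrightarrow> t \<in> S0 \<Longrightarrow> mR s t = mL s t" using mult_agree_S0 by simp

lemma star0_R: "astar S0 mR = star0"
  by (rule astar_cong) (use mult_agree_S0 in simp)

lemma S0_L: "s \<in> S0 \<Longrightarrow> s \<in> L" using LT.S0_subset by blast

lemma S0_R: "s \<in> S0 \<Longrightarrow> s \<in> R" using RT.S0_subset by blast

lemma S0_closed: "s \<in> S0 \<Longrightarrow> t \<in> S0 \<Longrightarrow> mL s t \<in> S0" using LT.S0_closed .

lemma plus0_S0: "s \<in> S0 \<Longrightarrow> plus0 s \<in> S0" using LT.plus0_S0 .

lemma star0_S0: "s \<in> S0 \<Longrightarrow> star0 s \<in> S0" using LT.star0_S0 .

lemma plus0_left_unit: "s \<in> S0 \<Longrightarrow> mL (plus0 s) s = s" using LT.plus0_left_unit .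

lemma star0_right_unit: "s \<in> S0 \<Longrightarrow> mL s (star0 s) = s" using LT.star0_right_unit .

lemma plus0_sq: "s \<in> S0 \<Longrightarrow> mL (plus0 s) (plus0 s) = plus0 s" using LT.plus0_sq .

lemma star0_sq: "s \<in> S0 \<Longrightarrow> mL (star0 s) (star0 s) = star0 s" using LT.star0_sq .

lemma plus0_idem: "s \<in> S0 \<Longrightarrow> plus0 s \<in> idems S0 mL" using LT.plus0_idem .

lemma star0_idem: "s \<in> S0 \<Longrightarrow> star0 s \<in> idems S0 mL" using LT.star0_idem .

lemma plus0_star0_of_idem: "e \<in> idems S0 mL \<Longrightarrow> plus0 e = e \<and> star0 e = e"
  using LT.plus0_of_idem LT.star0_of_idem by blast

lemma bL_of_S0: "s \<in> S0 \<Longrightarrow> bL s = s" using LT.bar_of_S0 .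

lemma eL_of_S0: "s \<in> S0 \<Longrightarrow> eL s = plus0 s" using LT.ee_of_S0 .

lemma bR_of_S0: "s \<in> S0 \<Longrightarrow> bR s = s" using RT.bar_of_S0 .

lemma fR_of_S0: "s \<in> S0 \<Longrightarrow> fR s = star0 s" using RT.ff_of_S0 star0_R by simp

lemma bL_S0: "x \<in> L \<Longrightarrow> bL x \<in> S0" using LT.bar_S0 .

lemma bR_S0: "a \<in> R \<Longrightarrow> bR a \<in> S0" using RT.bar_S0 .

lemma eL_L: "x \<in> L \<Longrightarrow> eL x \<in> L" using LT.ee_S .

lemma fR_R: "a \<in> R \<Longrightarrow> fR a \<in> R" using RT.ff_S .

lemma eL_bL_eq: "x \<in> L \<Longrightarrow> mL (eL x) (bL x) = x" using LT.ee_bar_eq .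

lemma bR_fR_eq: "a \<in> R \<Longrightarrow> mR (bR a) (fR a) = a" using RT.bar_ff_eq .

lemma eL_plus0: "x \<in> L \<Longrightarrow> mL (eL x) (plus0 (bL x)) = eL x" using LT.ee_plus0 .

lemma plus0_eL: "x \<in> L \<Longrightarrow> mL (plus0 (bL x)) (eL x) = plus0 (bL x)" using LT.plus0_ee .

lemma star0_fR: "a \<in> R \<Longrightarrow> mR (star0 (bR a)) (fR a) = fR a" using RT.star0_ff star0_R by simp

lemma fR_star0: "a \<in> R \<Longrightarrow> mR (fR a) (star0 (bR a)) = star0 (bR a)" using RT.ff_star0 star0_R by simp

lemma L_closed: "x \<in> L \<Longrightarrow> y \<in> L \<Longrightarrow> mL x y \<in> L" using LT.S_closed .

lemma R_closed: "x \<in> R \<Longrightarrow> y \<in> R \<Longrightarrow> mR x y \<in> R" using RT.S_closed .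

lemma L_assoc: "x \<in> L \<Longrightarrow> y \<in> L \<Longrightarrow> z \<in> L \<Longrightarrow> mL (mL x y) z = mL x (mL y z)" using LT.S_assoc .

lemma R_assoc: "x \<in> R \<Longrightarrow> y \<in> R \<Longrightarrow> z \<in> R \<Longrightarrow> mR (mR x y) z = mR x (mR y z)" using RT.S_assoc .

lemma components_eL: "x \<in> L \<Longrightarrow> bL (eL x) = plus0 (bL x) \<and> eL (eL x) = eL x"
  using LT.factor_components[OF LT.factor_of_ee] by blast

lemma components_fR: "a \<in> R \<Longrightarrow> bR (fR a) = star0 (bR a) \<and> fR (fR a) = fR a"
  using RT.factor_components[OF RT.factor_of_ff] star0_R by simp

lemma plus0_bR_st: assumes a: "a \<in> R" and y: "y \<in> L" shows "mL (plus0 (bR a)) (st a y) = st a y"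
proof -
  define s where "s = bR a"
  have s: "s \<in> S0" using bR_S0[OF a] s_def by simp
  have ps: "plus0 s \<in> S0" using plus0_S0[OF s] .
  have w: "st a y \<in> S0" using st_S0[OF a y] .
  have w2: "mL (plus0 s) (st a y) \<in> S0" using S0_closed[OF ps w] .
  have "st (mR (st (plus0 s) s) (fR a)) y = st (plus0 s) (mL (eL s) (st a y))"
    using st_assoc[OF S0_L[OF s] y S0_R[OF ps] a] bL_of_S0[OF s] s_def by simp
  moreover have "st (plus0 s) s = s"
    using st_S0_left[OF S0_R[OF ps] S0_L[OF s] ps] plus0_left_unit[OF s] by simp
  moreover have "mR s (fR a) = a" using bR_fR_eq[OF a] s_def by simp
  moreover have "mL (eL s) (st a y) = mL (plus0 s) (st a y)" using eL_of_S0[OF s] by simp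
  moreover have "st (plus0 s) (mL (plus0 s) (st a y)) = mL (plus0 s) (st a y)"
    using st_S0_left[OF S0_R[OF ps] S0_L[OF w2] ps] L_assoc[OF S0_L[OF ps] S0_L[OF ps] S0_L[OF w]]
      plus0_sq[OF s] by simp
  ultimately show ?thesis using s_def by simp
qed

lemma st_star0_bL: assumes a: "a \<in> R" and y: "y \<in> L" shows "mR (st a y) (star0 (bL y)) = st a y"
proof -
  define t where "t = bL y"
  have t: "t \<in> S0" using bL_S0[OF y] t_def by simp
  have qt: "star0 t \<in> S0" using star0_S0[OF t] .
  have w: "st a y \<in> S0" using st_S0[OF a y] .
  have w2: "mR (st a y) (star0 t) \<in> S0" using S0_closed[OF w qt] mult_agree[OF w qt] by simp
  have "st (mR (st a y) (fR t)) (star0 t) = st a (mL (eL y) (st t (star0 t)))"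
    using st_assoc[OF y S0_L[OF qt] a S0_R[OF t]] bR_of_S0[OF t] t_def by simp
  moreover have "fR t = star0 t" using fR_of_S0[OF t] .
  moreover have "st t (star0 t) = t"
    using st_S0_left[OF S0_R[OF t] S0_L[OF qt] t] star0_right_unit[OF t] by simp
  moreover have "mL (eL y) t = y" using eL_bL_eq[OF y] t_def by simp
  moreover have "st (mR (st a y) (star0 t)) (star0 t) = mR (st a y) (star0 t)"
    using st_S0_right[OF S0_R[OF w2] S0_L[OF qt] qt] R_assoc[OF S0_R[OF w] S0_R[OF qt] S0_R[OF qt]]
      star0_sq[OF t] mult_agree[OF qt qt] by simp
  ultimately show ?thesis using t_def by simp
qed

abbreviation "T \<equiv> T_set L mL R mR S0"

abbreviation "Tm \<equiv> T_mult L mL R mR S0 st"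

lemma T_iff: "(x, a) \<in> T \<longleftrightarrow> x \<in> L \<and> a \<in> R \<and> bL x = bR a"
  unfolding T_set_def by simp

lemma Tm_eq: "Tm (x, a) (y, b) = (mL (eL x) (st a y), mR (st a y) (fR b))"
  unfolding T_mult_def by simp

lemma components_eL_mult: assumes x: "x \<in> L" and w: "w \<in> S0" and pw: "mL (plus0 (bL x)) w = w"
  shows "bL (mL (eL x) w) = w \<and> eL (mL (eL x) w) = mL (eL x) (plus0 w) \<and> mL (eL x) w \<in> L"
  using LT.components_idem_mult[OF LT.ee_idem[OF x] plus0_idem[OF bL_S0[OF x]] LT.ee_GL[OF x] w pw]
    L_closed[OF eL_L[OF x] S0_L[OF w]]
  by blast

lemma components_mult_fR: assumes a: "a \<in> R" and w: "w \<in> S0" and wq: "mR w (star0 (bR a)) = w"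
  shows "bR (mR w (fR a)) = w \<and> fR (mR w (fR a)) = mR (star0 w) (fR a) \<and> mR w (fR a) \<in> R"
proof -
  have q: "astar S0 mR (bR a) \<in> idems S0 mR" using RT.star0_idem[OF bR_S0[OF a]] .
  have "bR (mR w (fR a)) = w \<and> eR (mR w (fR a)) = aplus S0 mR w \<and> fR (mR w (fR a)) = mR (astar S0 mR w) (fR a)"
    using RT.components_mult_idem[OF RT.ff_idem[OF a] q RT.ff_GR[OF a] w] wq star0_R by simp
  then show ?thesis using star0_R R_closed[OF S0_R[OF w] fR_R[OF a]] by simp
qed

lemma T_mult_components: assumes p: "(x, a) \<in> T" and q: "(y, b) \<in> T"
  shows "Tm (x, a) (y, b) \<in> T \<and>
    bL (mL (eL x) (st a y)) = st a y \<and> eL (mL (eL x) (st a y)) = mL (eL x) (plus0 (st a y)) \<and>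
    bR (mR (st a y) (fR b)) = st a y \<and> fR (mR (st a y) (fR b)) = mR (star0 (st a y)) (fR b)"
proof -
  have x: "x \<in> L" "a \<in> R" "bL x = bR a" and y: "y \<in> L" "b \<in> R" "bL y = bR b" using p q T_iff by auto
  have w: "st a y \<in> S0" using st_S0[OF x(2) y(1)] .
  have pw: "mL (plus0 (bL x)) (st a y) = st a y" using plus0_bR_st[OF x(2) y(1)] x(3) by simp
  have wq: "mR (st a y) (star0 (bR b)) = st a y" using st_star0_bL[OF x(2) y(1)] y(3) by simp
  show ?thesis
    using components_eL_mult[OF x(1) w pw] components_mult_fR[OF y(2) w wq] T_iff Tm_eq by simp
qed

lemma T_closed: "p \<in> T \<Longrightarrow> q \<in> T \<Longrightarrow> Tm p q \<in> T"
  using T_mult_components by (cases p, cases q) blast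

lemma T_assoc: assumes p: "(x, a) \<in> T" and q: "(y, b) \<in> T" and r: "(z, c) \<in> T"
  shows "Tm (Tm (x, a) (y, b)) (z, c) = Tm (x, a) (Tm (y, b) (z, c))"
proof -
  have x: "x \<in> L" "a \<in> R" "bL x = bR a" and y: "y \<in> L" "b \<in> R" "bL y = bR b"
    and z: "z \<in> L" "c \<in> R" "bL z = bR c" using p q r T_iff by auto
  define u v where "u = st a y" "v = st b z"
  have u: "u \<in> S0" and v: "v \<in> S0" using st_S0 x y z u_v_def by auto
  have tp1: "bL (mL (eL x) u) = u \<and> eL (mL (eL x) u) = mL (eL x) (plus0 u) \<and>
    bR (mR u (fR b)) = u \<and> fR (mR u (fR b)) = mR (star0 u) (fR b)" using T_mult_components[OF p q] u_v_def by simp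
  have tp2: "bL (mL (eL y) v) = v \<and> eL (mL (eL y) v) = mL (eL y) (plus0 v) \<and>
    bR (mR v (fR c)) = v \<and> fR (mR v (fR c)) = mR (star0 v) (fR c)" using T_mult_components[OF q r] u_v_def by simp
  have uf_R: "mR u (fR b) \<in> R" using R_closed[OF S0_R[OF u] fR_R[OF y(2)]] .
  have ev_L: "mL (eL y) v \<in> L" using L_closed[OF eL_L[OF y(1)] S0_L[OF v]] .
  define w where "w = st (mR u (fR b)) z"
  have w: "w \<in> S0" using st_S0[OF uf_R z(1)] w_def by simp
  have w_eq: "w = st a (mL (eL y) v)"
    using st_assoc[OF y(1) z(1) x(2) y(2) y(3)] u_v_def w_def by simp
  have lhs: "Tm (Tm (x, a) (y, b)) (z, c) = (mL (mL (eL x) (plus0 u)) w, mR w (fR c))"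
    using Tm_eq tp1 u_v_def w_def by simp
  have rhs: "Tm (x, a) (Tm (y, b) (z, c)) = (mL (eL x) w, mR w (mR (star0 v) (fR c)))"
    using Tm_eq tp2 u_v_def w_eq by simp
  have g1: "mL (plus0 u) w = w" using plus0_bR_st[OF uf_R z(1)] tp1 w_def by simp
  have g2: "mR w (star0 v) = w" using st_star0_bL[OF x(2) ev_L] tp2 w_eq by simp
  have "mL (mL (eL x) (plus0 u)) w = mL (eL x) w"
    using L_assoc[OF eL_L[OF x(1)] S0_L[OF plus0_S0[OF u]] S0_L[OF w]] g1 by simp
  moreover have "mR w (mR (star0 v) (fR c)) = mR w (fR c)"
    using R_assoc[OF S0_R[OF w] S0_R[OF star0_S0[OF v]] fR_R[OF z(2)], symmetric] g2 by simp
  ultimately show ?thesis using lhs rhs by simp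
qed

lemma T_semigroup: "semigroup_on T Tm"
  unfolding semigroup_on_def
proof (intro conjI ballI)
  fix p q assume "p \<in> T" "q \<in> T" then show "Tm p q \<in> T" using T_closed by blast
next
  fix p q r assume "p \<in> T" "q \<in> T" "r \<in> T"
  then show "Tm (Tm p q) r = Tm p (Tm q r)" using T_assoc by (cases p, cases q, cases r) blast
qed

lemma plus0_bL_mult: assumes x: "x \<in> L" shows "mL (plus0 (bL x)) x = bL x"
proof -
  have "mL (plus0 (bL x)) x = mL (plus0 (bL x)) (mL (eL x) (bL x))" using eL_bL_eq[OF x] by simp
  also have "\<dots> = mL (mL (plus0 (bL x)) (eL x)) (bL x)"
    using L_assoc[OF S0_L[OF plus0_S0[OF bL_S0[OF x]]] eL_L[OF x] S0_L[OF bL_S0[OF x]]] by simp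
  also have "\<dots> = bL x" using plus0_eL[OF x] plus0_left_unit[OF bL_S0[OF x]] by simp
  finally show ?thesis .
qed

lemma mult_star0_bR: assumes a: "a \<in> R" shows "mR a (star0 (bR a)) = bR a"
proof -
  define s where "s = bR a"
  have s: "s \<in> S0" using bR_S0[OF a] s_def by simp
  have "mR a (star0 s) = mR (mR s (fR a)) (star0 s)" using bR_fR_eq[OF a] s_def by simp
  also have "\<dots> = mR s (mR (fR a) (star0 s))"
    using R_assoc[OF S0_R[OF s] fR_R[OF a] S0_R[OF star0_S0[OF s]]] .
  also have "\<dots> = s"
    using fR_star0[OF a] star0_right_unit[OF s] mult_agree[OF s star0_S0[OF s]] s_def by simp
  finally show ?thesis using s_def by simp
qed

lemma T_plus_mem: assumes p: "(x, a) \<in> T" shows "(eL x, plus0 (bL x)) \<in> T"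
proof -
  have x: "x \<in> L" using p T_iff by auto
  show ?thesis
    using T_iff eL_L[OF x] S0_R[OF plus0_S0[OF bL_S0[OF x]]] components_eL[OF x]
      bR_of_S0[OF plus0_S0[OF bL_S0[OF x]]] by simp
qed

lemma T_star_mem: assumes p: "(x, a) \<in> T" shows "(star0 (bL x), fR a) \<in> T"
proof -
  have x: "x \<in> L" "a \<in> R" "bL x = bR a" using p T_iff by auto
  show ?thesis
    using T_iff S0_L[OF star0_S0[OF bL_S0[OF x(1)]]] fR_R[OF x(2)]
      bL_of_S0[OF star0_S0[OF bL_S0[OF x(1)]]] components_fR[OF x(2)] x(3)
    by simp
qed

text \<open>Condition (1) at \<open>(y, b) = (e\<^sub>x, (bar x)\<^sup>+)\<close>, both sides evaluated by (2).\<close>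

lemma st_eL_bL:
  assumes b: "b \<in> R" and x: "x \<in> L"
  shows "st b x = mL (st b (eL x)) (bL x)" and "mL (st b (eL x)) (plus0 (bL x)) = st b (eL x)"
proof -
  define s w where "s = bL x" "w = st b (eL x)"
  have s: "s \<in> S0" using bL_S0[OF x] s_w_def by simp
  have ps: "plus0 s \<in> S0" using plus0_S0[OF s] .
  have ps_idem: "plus0 (plus0 s) = plus0 s \<and> star0 (plus0 s) = plus0 s"
    using plus0_star0_of_idem[OF plus0_idem[OF s]] .
  have w: "w \<in> S0" using st_S0[OF b eL_L[OF x]] s_w_def by simp
  have bex: "bL (eL x) = plus0 s" and eex: "eL (eL x) = eL x"
    using components_eL[OF x] s_w_def by auto
  have wR: "mR w (plus0 s) = w" using st_star0_bL[OF b eL_L[OF x]] bex ps_idem s_w_def by simp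
  then have wL: "mL w (plus0 s) = w" using mult_agree[OF w ps] by simp
  have "st (mR w (fR (plus0 s))) x = st b (mL (eL (eL x)) (st (plus0 s) x))"
    using st_assoc[OF eL_L[OF x] x b S0_R[OF ps]] bex bR_of_S0[OF ps] s_w_def by simp
  moreover have "st (mR w (fR (plus0 s))) x = mL w x"
    using fR_of_S0[OF ps] ps_idem wR st_S0_left[OF S0_R[OF w] x w] by simp
  moreover have "mL (eL (eL x)) (st (plus0 s) x) = x"
    using eex st_S0_left[OF S0_R[OF ps] x ps] plus0_bL_mult[OF x] eL_bL_eq[OF x] s_w_def by simp
  ultimately have "st b x = mL w x" by simp
  also have "\<dots> = mL w (mL (eL x) s)" using eL_bL_eq[OF x] s_w_def by simp
  also have "\<dots> = mL (mL (mL w (plus0 s)) (eL x)) s"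
    using L_assoc[OF S0_L[OF w] eL_L[OF x] S0_L[OF s]] wL by simp
  also have "\<dots> = mL w s"
    using L_assoc[OF S0_L[OF w] S0_L[OF ps] eL_L[OF x]] plus0_eL[OF x] wL s_w_def by simp
  finally show "st b x = mL (st b (eL x)) (bL x)" using s_w_def by simp
  show "mL (st b (eL x)) (plus0 (bL x)) = st b (eL x)" using wL s_w_def by simp
qed

lemma T_mult_left_form:
  assumes p: "(x, a) \<in> T" and q: "(y, b) \<in> T"
  defines "w \<equiv> st b (eL x)"
  shows "w \<in> S0" "mL w (plus0 (bL x)) = w"
    and "Tm (y, b) (x, a) = (mL (eL y) (mL w (bL x)), mR (mL w (bL x)) (fR a))"
    and "Tm (y, b) (eL x, plus0 (bL x)) = (mL (eL y) w, w)"
proof -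
  have x: "x \<in> L" and b: "b \<in> R" using p q T_iff by auto
  have ps: "plus0 (bL x) \<in> S0" using plus0_S0[OF bL_S0[OF x]] .
  show w: "w \<in> S0" using st_S0[OF b eL_L[OF x]] w_def by simp
  show wP: "mL w (plus0 (bL x)) = w" using st_eL_bL(2)[OF b x] w_def by simp
  show "Tm (y, b) (x, a) = (mL (eL y) (mL w (bL x)), mR (mL w (bL x)) (fR a))"
    using Tm_eq st_eL_bL(1)[OF b x] w_def by simp
  show "Tm (y, b) (eL x, plus0 (bL x)) = (mL (eL y) w, w)"
    using Tm_eq fR_of_S0[OF ps] plus0_star0_of_idem[OF plus0_idem[OF bL_S0[OF x]]] wP
      mult_agree[OF w ps] w_def by simp
qed

lemma mult_bL_fR_star0:
  assumes p: "(x, a) \<in> T" and w: "w \<in> S0"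
  shows "mR (mR (mL w (bL x)) (fR a)) (star0 (bL x)) = mL w (bL x)"
proof -
  have x: "x \<in> L" "a \<in> R" "bL x = bR a" using p T_iff by auto
  define s where "s = bL x"
  have s: "s \<in> S0" using bL_S0[OF x(1)] s_def by simp
  have ws: "mL w s \<in> S0" using S0_closed[OF w s] .
  have "mR (mR (mL w s) (fR a)) (star0 s) = mR (mL w s) (star0 s)"
    using R_assoc[OF S0_R[OF ws] fR_R[OF x(2)] S0_R[OF star0_S0[OF s]]] fR_star0[OF x(2)] x(3) s_def
    by simp
  also have "\<dots> = mL w s"
    using mult_agree[OF ws star0_S0[OF s]] L_assoc[OF S0_L[OF w] S0_L[OF s] S0_L[OF star0_S0[OF s]]]
      star0_right_unit[OF s] by simp
  finally show ?thesis using s_def by simp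
qed

lemma T_Rstar_cancel:
  assumes p: "(x, a) \<in> T" and q: "(y, b) \<in> T" and r: "(z, c) \<in> T"
  shows "Tm (y, b) (x, a) = Tm (z, c) (x, a) \<longleftrightarrow>
    Tm (y, b) (eL x, plus0 (bL x)) = Tm (z, c) (eL x, plus0 (bL x))"
proof -
  define s u v where "s = bL x" "u = st b (eL x)" "v = st c (eL x)"
  have x: "x \<in> L" and y: "y \<in> L" and z: "z \<in> L" using p q r T_iff by auto
  have s: "s \<in> S0" using bL_S0[OF x] s_u_v_def by simp
  have Rs: "Rstar L mL s (plus0 s)" using LT.plus0_Rstar[OF s] .
  note fu = T_mult_left_form[OF p q, folded s_u_v_def] and fv = T_mult_left_form[OF p r, folded s_u_v_def]
  have ey: "eL y \<in> L" and ez: "eL z \<in> L" using eL_L y z by auto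
  have u: "u \<in> S0" and v: "v \<in> S0" using fu(1) fv(1) by auto
  have "(mL (eL y) (mL u s) = mL (eL z) (mL v s) \<and> mR (mL u s) (fR a) = mR (mL v s) (fR a))
      \<longleftrightarrow> (mL (eL y) u = mL (eL z) v \<and> u = v)"
  proof
    assume h: "mL (eL y) (mL u s) = mL (eL z) (mL v s) \<and> mR (mL u s) (fR a) = mR (mL v s) (fR a)"
    then have "mL u s = mL v s" using mult_bL_fR_star0[OF p u] mult_bL_fR_star0[OF p v] s_u_v_def
      by metis
    then have uv: "u = v" using Rstar_cancel[OF Rs S0_L[OF u] S0_L[OF v]] fu(2) fv(2) by simp
    have "mL (mL (eL y) u) s = mL (mL (eL z) u) s"
      using h uv L_assoc[OF ey S0_L[OF u] S0_L[OF s]] L_assoc[OF ez S0_L[OF u] S0_L[OF s]] by simp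
    then have "mL (mL (eL y) u) (plus0 s) = mL (mL (eL z) u) (plus0 s)"
      using Rstar_cancel[OF Rs L_closed[OF ey S0_L[OF u]] L_closed[OF ez S0_L[OF u]]] by simp
    then show "mL (eL y) u = mL (eL z) v \<and> u = v"
      using L_assoc[OF ey S0_L[OF u] S0_L[OF plus0_S0[OF s]]]
        L_assoc[OF ez S0_L[OF u] S0_L[OF plus0_S0[OF s]]] fu(2) uv by simp
  next
    assume "mL (eL y) u = mL (eL z) v \<and> u = v"
    then show "mL (eL y) (mL u s) = mL (eL z) (mL v s) \<and> mR (mL u s) (fR a) = mR (mL v s) (fR a)"
      using L_assoc[OF ey S0_L[OF u] S0_L[OF s]] L_assoc[OF ez S0_L[OF u] S0_L[OF s]] by metis
  qed
  then show ?thesis using fu(3,4) fv(3,4) by (simp add: s_u_v_def)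
qed

lemma T_Rstar_fix:
  assumes p: "(x, a) \<in> T" and q: "(y, b) \<in> T"
  shows "Tm (y, b) (x, a) = (x, a) \<longleftrightarrow> Tm (y, b) (eL x, plus0 (bL x)) = (eL x, plus0 (bL x))"
proof -
  have x: "x \<in> L" "a \<in> R" "bL x = bR a" and y: "y \<in> L" using p q T_iff by auto
  define s w where "s = bL x" "w = st b (eL x)"
  have s: "s \<in> S0" using bL_S0[OF x(1)] s_w_def by simp
  have Rs: "Rstar L mL s (plus0 s)" using LT.plus0_Rstar[OF s] .
  have a_eq: "a = mR s (fR a)" using bR_fR_eq[OF x(2)] x(3) s_w_def by simp
  have x_eq: "x = mL (eL x) s" using eL_bL_eq[OF x(1)] s_w_def by simp
  note fw = T_mult_left_form[OF p q, folded s_w_def]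
  have w: "w \<in> S0" using fw(1) .
  have ey: "eL y \<in> L" using eL_L[OF y] .
  have "(mL (eL y) (mL w s) = x \<and> mR (mL w s) (fR a) = a) \<longleftrightarrow> (mL (eL y) w = eL x \<and> w = plus0 s)"
  proof
    assume h: "mL (eL y) (mL w s) = x \<and> mR (mL w s) (fR a) = a"
    then have "mL w s = s"
      using mult_bL_fR_star0[OF p w] mult_star0_bR[OF x(2)] x(3) s_w_def by metis
    then have ww: "w = plus0 s" using Rstar_cancel_fix[OF Rs S0_L[OF w]] fw(2) by simp
    have "mL (eL y) s = mL (eL x) s" using h ww plus0_left_unit[OF s] x_eq by simp
    then have "mL (eL y) (plus0 s) = mL (eL x) (plus0 s)"
      using Rstar_cancel[OF Rs ey eL_L[OF x(1)]] by simp
    then show "mL (eL y) w = eL x \<and> w = plus0 s" using ww eL_plus0[OF x(1)] s_w_def by simp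
  next
    assume h: "mL (eL y) w = eL x \<and> w = plus0 s"
    then have "mL (eL y) (mL w s) = x" using L_assoc[OF ey S0_L[OF w] S0_L[OF s]] x_eq by metis
    moreover have "mR (mL w s) (fR a) = a" using h plus0_left_unit[OF s] a_eq by simp
    ultimately show "mL (eL y) (mL w s) = x \<and> mR (mL w s) (fR a) = a" by simp
  qed
  then show ?thesis using fw(3,4) by (simp add: s_w_def)
qed

lemma T_Rstar: assumes p: "(x, a) \<in> T" shows "Rstar T Tm (x, a) (eL x, plus0 (bL x))"
proof (rule RstarI)
  fix q r assume "q \<in> T" "r \<in> T"
  then show "Tm q (x, a) = Tm r (x, a) \<longleftrightarrow> Tm q (eL x, plus0 (bL x)) = Tm r (eL x, plus0 (bL x))"
    using T_Rstar_cancel[OF p] by (cases q, cases r) simp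
next
  fix q assume "q \<in> T"
  then show "Tm q (x, a) = (x, a) \<longleftrightarrow> Tm q (eL x, plus0 (bL x)) = (eL x, plus0 (bL x))"
    using T_Rstar_fix[OF p] by (cases q) simp
qed (use p T_plus_mem[OF p] in auto)

text \<open>Condition (1) at \<open>(y, b) = ((bar a)\<^sup>*, f\<^sub>a)\<close>, both sides evaluated by (2).\<close>

lemma st_bR_fR:
  assumes a: "a \<in> R" and y: "y \<in> L"
  shows "st a y = mL (bR a) (st (fR a) y)" and "mL (star0 (bR a)) (st (fR a) y) = st (fR a) y"
proof -
  define s v where "s = bR a" "v = st (fR a) y"
  have s: "s \<in> S0" using bR_S0[OF a] s_v_def by simp
  have qs: "star0 s \<in> S0" using star0_S0[OF s] .
  have qs_idem: "plus0 (star0 s) = star0 s \<and> star0 (star0 s) = star0 s"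
    using plus0_star0_of_idem[OF star0_idem[OF s]] .
  have v: "v \<in> S0" using st_S0[OF fR_R[OF a] y] s_v_def by simp
  have bfa: "bR (fR a) = star0 s" and ffa: "fR (fR a) = fR a"
    using components_fR[OF a] s_v_def by auto
  have qv: "mL (star0 s) v = v" using plus0_bR_st[OF fR_R[OF a] y] bfa qs_idem s_v_def by simp
  have "st (mR (st s (star0 s)) (fR (fR a))) y = st s (mL (eL (star0 s)) (st (fR a) y))"
    using st_assoc[OF S0_L[OF qs] y S0_R[OF s] fR_R[OF a]] bL_of_S0[OF qs] bfa by simp
  moreover have "st (mR (st s (star0 s)) (fR (fR a))) y = st a y"
    using st_S0_left[OF S0_R[OF s] S0_L[OF qs] s] star0_right_unit[OF s] ffa bR_fR_eq[OF a] s_v_def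
    by simp
  moreover have "st s (mL (eL (star0 s)) (st (fR a) y)) = mL s v"
    using eL_of_S0[OF qs] qs_idem qv st_S0_left[OF S0_R[OF s] S0_L[OF v] s] s_v_def by simp
  ultimately show "st a y = mL (bR a) (st (fR a) y)" using s_v_def by simp
  show "mL (star0 (bR a)) (st (fR a) y) = st (fR a) y" using qv s_v_def by simp
qed

lemma T_mult_right_form:
  assumes p: "(x, a) \<in> T" and q: "(y, b) \<in> T"
  defines "v \<equiv> st (fR a) y"
  shows "v \<in> S0" "mL (star0 (bL x)) v = v"
    and "Tm (x, a) (y, b) = (mL (eL x) (mL (bL x) v), mR (mL (bL x) v) (fR b))"
    and "Tm (star0 (bL x), fR a) (y, b) = (v, mR v (fR b))"
proof -
  have x: "x \<in> L" "a \<in> R" "bL x = bR a" and y: "y \<in> L" using p q T_iff by auto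
  have qs: "star0 (bL x) \<in> S0" using star0_S0[OF bL_S0[OF x(1)]] .
  show "v \<in> S0" using st_S0[OF fR_R[OF x(2)] y] v_def by simp
  show qv: "mL (star0 (bL x)) v = v" using st_bR_fR(2)[OF x(2) y] x(3) v_def by simp
  show "Tm (x, a) (y, b) = (mL (eL x) (mL (bL x) v), mR (mL (bL x) v) (fR b))"
    using Tm_eq st_bR_fR(1)[OF x(2) y] x(3) v_def by simp
  show "Tm (star0 (bL x), fR a) (y, b) = (v, mR v (fR b))"
    using Tm_eq eL_of_S0[OF qs] plus0_star0_of_idem[OF star0_idem[OF bL_S0[OF x(1)]]] qv v_def
    by simp
qed

lemma T_star_idem:
  assumes p: "(x, a) \<in> T"
  shows "Tm (star0 (bL x), fR a) (star0 (bL x), fR a) = (star0 (bL x), fR a)"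
proof -
  have x: "x \<in> L" "a \<in> R" "bL x = bR a" using p T_iff by auto
  have s: "bL x \<in> S0" using bL_S0[OF x(1)] .
  have qs: "star0 (bL x) \<in> S0" using star0_S0[OF s] .
  have "st (fR a) (star0 (bL x)) = star0 (bL x)"
    using st_S0_right[OF fR_R[OF x(2)] S0_L[OF qs] qs] fR_star0[OF x(2)] x(3) by simp
  then show ?thesis
    using Tm_eq eL_of_S0[OF qs] plus0_star0_of_idem[OF star0_idem[OF s]] star0_sq[OF s]
      components_fR[OF x(2)] star0_fR[OF x(2)] x(3)
    mult_agree[OF qs qs] by simp
qed

lemma T_plus_idem:
  assumes p: "(x, a) \<in> T"
  shows "Tm (eL x, plus0 (bL x)) (eL x, plus0 (bL x)) = (eL x, plus0 (bL x))"
proof -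
  have x: "x \<in> L" "a \<in> R" "bL x = bR a" using p T_iff by auto
  have s: "bL x \<in> S0" using bL_S0[OF x(1)] .
  have ps: "plus0 (bL x) \<in> S0" using plus0_S0[OF s] .
  have "st (plus0 (bL x)) (eL x) = plus0 (bL x)"
    using st_S0_left[OF S0_R[OF ps] eL_L[OF x(1)] ps] plus0_eL[OF x(1)] by simp
  then show ?thesis
    using Tm_eq components_eL[OF x(1)] eL_plus0[OF x(1)] fR_of_S0[OF ps]
      plus0_star0_of_idem[OF plus0_idem[OF s]] plus0_sq[OF s]
    mult_agree[OF ps ps] by simp
qed

lemma plus0_eL_bL_mult:
  assumes x: "x \<in> L" and v: "v \<in> S0"
  shows "mL (plus0 (bL x)) (mL (eL x) (mL (bL x) v)) = mL (bL x) v"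
proof -
  define s where "s = bL x"
  have s: "s \<in> S0" using bL_S0[OF x] s_def by simp
  have "mL (plus0 s) (mL (eL x) (mL s v)) = mL (mL (plus0 s) (eL x)) (mL s v)"
    using L_assoc[OF S0_L[OF plus0_S0[OF s]] eL_L[OF x] S0_L[OF S0_closed[OF s v]]] by simp
  also have "\<dots> = mL (mL (plus0 s) s) v"
    using plus0_eL[OF x] L_assoc[OF S0_L[OF plus0_S0[OF s]] S0_L[OF s] S0_L[OF v]] s_def by simp
  also have "\<dots> = mL s v" using plus0_left_unit[OF s] by simp
  finally show ?thesis using s_def by simp
qed

lemma T_Lstar_cancel:
  assumes p: "(x, a) \<in> T" and q: "(y, b) \<in> T" and r: "(z, c) \<in> T"
  shows "Tm (x, a) (y, b) = Tm (x, a) (z, c) \<longleftrightarrow>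
    Tm (star0 (bL x), fR a) (y, b) = Tm (star0 (bL x), fR a) (z, c)"
proof -
  define s u v where "s = bL x" "u = st (fR a) y" "v = st (fR a) z"
  have x: "x \<in> L" using p T_iff by auto
  have s: "s \<in> S0" using bL_S0[OF x] s_u_v_def by simp
  have qs: "star0 s \<in> S0" using star0_S0[OF s] .
  have LsL: "Lstar L mL s (star0 s)" using LT.star0_Lstar[OF s] .
  have LsR: "Lstar R mR s (star0 s)" using RT.star0_Lstar[OF s] star0_R by simp
  note fu = T_mult_right_form[OF p q, folded s_u_v_def] and fv = T_mult_right_form[OF p r, folded s_u_v_def]
  have u: "u \<in> S0" and v: "v \<in> S0" using fu(1) fv(1) by auto
  have fb: "fR b \<in> R" and fc: "fR c \<in> R" using q r T_iff fR_R by auto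
  have s_mult: "mR (mL s u) f = mR s (mR u f)" if "f \<in> R" for f
    using mult_agree[OF s u] R_assoc[OF S0_R[OF s] S0_R[OF u] that] by simp
  have qs_mult: "mR (star0 s) (mR u f) = mR u f" if "f \<in> R" for f
    using R_assoc[OF S0_R[OF qs] S0_R[OF u] that, symmetric] mult_agree[OF qs u] fu(2) by simp
  have "(mL (eL x) (mL s u) = mL (eL x) (mL s v) \<and> mR (mL s u) (fR b) = mR (mL s v) (fR c))
      \<longleftrightarrow> (u = v \<and> mR u (fR b) = mR v (fR c))"
  proof
    assume h: "mL (eL x) (mL s u) = mL (eL x) (mL s v) \<and> mR (mL s u) (fR b) = mR (mL s v) (fR c)"
    then have "mL s u = mL s v" using plus0_eL_bL_mult[OF x u] plus0_eL_bL_mult[OF x v] s_u_v_def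
      by metis
    then have uv: "u = v" using Lstar_cancel[OF LsL S0_L[OF u] S0_L[OF v]] fu(2) fv(2) by simp
    have "mR s (mR u (fR b)) = mR s (mR u (fR c))" using h uv s_mult[OF fb] s_mult[OF fc] by simp
    then have "mR (star0 s) (mR u (fR b)) = mR (star0 s) (mR u (fR c))"
      using Lstar_cancel[OF LsR R_closed[OF S0_R[OF u] fb] R_closed[OF S0_R[OF u] fc]] by simp
    then show "u = v \<and> mR u (fR b) = mR v (fR c)" using qs_mult[OF fb] qs_mult[OF fc] uv by simp
  next
    assume h: "u = v \<and> mR u (fR b) = mR v (fR c)"
    then show "mL (eL x) (mL s u) = mL (eL x) (mL s v) \<and> mR (mL s u) (fR b) = mR (mL s v) (fR c)"
      using s_mult[OF fb] s_mult[OF fc] by metis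
  qed
  then show ?thesis using fu(3,4) fv(3,4) by (simp add: s_u_v_def)
qed

lemma T_Lstar_fix:
  assumes p: "(x, a) \<in> T" and q: "(y, b) \<in> T"
  shows "Tm (x, a) (y, b) = (x, a) \<longleftrightarrow> Tm (star0 (bL x), fR a) (y, b) = (star0 (bL x), fR a)"
proof -
  have x: "x \<in> L" "a \<in> R" "bL x = bR a" using p T_iff by auto
  define s v where "s = bL x" "v = st (fR a) y"
  have s: "s \<in> S0" using bL_S0[OF x(1)] s_v_def by simp
  have LsL: "Lstar L mL s (star0 s)" using LT.star0_Lstar[OF s] .
  have LsR: "Lstar R mR s (star0 s)" using RT.star0_Lstar[OF s] star0_R by simp
  have a_eq: "a = mR s (fR a)" using bR_fR_eq[OF x(2)] x(3) s_v_def by simp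
  have x_eq: "x = mL (eL x) s" using eL_bL_eq[OF x(1)] s_v_def by simp
  note fv = T_mult_right_form[OF p q, folded s_v_def]
  have v: "v \<in> S0" using fv(1) .
  have fb: "fR b \<in> R" using q T_iff fR_R by auto
  have s_mult: "mR (mL s v) (fR b) = mR s (mR v (fR b))"
    using mult_agree[OF s v] R_assoc[OF S0_R[OF s] S0_R[OF v] fb] by simp
  have "(mL (eL x) (mL s v) = x \<and> mR (mL s v) (fR b) = a) \<longleftrightarrow> (v = star0 s \<and> mR v (fR b) = fR a)"
  proof
    assume h: "mL (eL x) (mL s v) = x \<and> mR (mL s v) (fR b) = a"
    then have "mL s v = s" using plus0_eL_bL_mult[OF x(1) v] plus0_bL_mult[OF x(1)] s_v_def by metis
    then have vv: "v = star0 s" using Lstar_cancel_fix[OF LsL S0_L[OF v]] fv(2) by simp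
    have "mR s (fR b) = mR s (fR a)" using h vv star0_right_unit[OF s] a_eq by simp
    then have "mR (star0 s) (fR b) = mR (star0 s) (fR a)"
      using Lstar_cancel[OF LsR fb fR_R[OF x(2)]]
      by simp
    then show "v = star0 s \<and> mR v (fR b) = fR a" using vv star0_fR[OF x(2)] x(3) s_v_def by simp
  next
    assume "v = star0 s \<and> mR v (fR b) = fR a"
    then show "mL (eL x) (mL s v) = x \<and> mR (mL s v) (fR b) = a"
      using star0_right_unit[OF s] x_eq s_mult a_eq by auto
  qed
  then show ?thesis using fv(3,4) by (simp add: s_v_def)
qed

lemma T_Lstar: assumes p: "(x, a) \<in> T" shows "Lstar T Tm (x, a) (star0 (bL x), fR a)"
proof (rule LstarI)
  fix q r assume "q \<in> T" "r \<in> T"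
  then show "Tm (x, a) q = Tm (x, a) r \<longleftrightarrow> Tm (star0 (bL x), fR a) q = Tm (star0 (bL x), fR a) r"
    using T_Lstar_cancel[OF p] by (cases q, cases r) simp
next
  fix q assume "q \<in> T"
  then show "Tm (x, a) q = (x, a) \<longleftrightarrow> Tm (star0 (bL x), fR a) q = (star0 (bL x), fR a)"
    using T_Lstar_fix[OF p] by (cases q) simp
qed (use p T_star_mem[OF p] in auto)

lemma T_abundant: "abundant T Tm"
proof -
  have R: "\<exists>e\<in>idems T Tm. Rstar T Tm p e" if p: "p \<in> T" for p
  proof -
    obtain x a where xa: "p = (x, a)" by (cases p)
    have "(eL x, plus0 (bL x)) \<in> idems T Tm"
      using T_plus_mem T_plus_idem p xa unfolding idems_def by simp
    then show ?thesis using T_Rstar p xa by blast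
  qed
  have L: "\<exists>e\<in>idems T Tm. Lstar T Tm p e" if p: "p \<in> T" for p
  proof -
    obtain x a where xa: "p = (x, a)" by (cases p)
    have "(star0 (bL x), fR a) \<in> idems T Tm"
      using T_star_mem T_star_idem p xa unfolding idems_def by simp
    then show ?thesis using T_Lstar p xa by blast
  qed
  show ?thesis unfolding abundant_def using T_semigroup R L by blast
qed

subsection \<open>The adequate transversal \<open>T\<^sup>0\<close>\<close>

abbreviation "T0 \<equiv> T0_set S0"

lemma T0_iff: "(u, v) \<in> T0 \<longleftrightarrow> u \<in> S0 \<and> v = u" unfolding T0_set_def by auto

lemma T0_elim: "p \<in> T0 \<Longrightarrow> \<exists>s. s \<in> S0 \<and> p = (s, s)" unfolding T0_set_def by auto

lemma T0_subset: "T0 \<subseteq> T"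
proof
  fix p assume "p \<in> T0"
  then obtain s where s: "s \<in> S0" "p = (s, s)" using T0_elim by blast
  then show "p \<in> T" using T_iff S0_L S0_R bL_of_S0 bR_of_S0 by simp
qed

lemma Tm_T0: assumes s: "s \<in> S0" and t: "t \<in> S0" shows "Tm (s, s) (t, t) = (mL s t, mL s t)"
proof -
  have st: "st s t = mL s t" using st_S0_left[OF S0_R[OF s] S0_L[OF t] s] .
  have 1: "mL (eL s) (st s t) = mL s t"
    using st eL_of_S0[OF s] L_assoc[OF S0_L[OF plus0_S0[OF s]] S0_L[OF s] S0_L[OF t], symmetric]
      plus0_left_unit[OF s] by simp
  have 2: "mR (st s t) (fR t) = mL s t"
    using st fR_of_S0[OF t] mult_agree[OF S0_closed[OF s t] star0_S0[OF t]]
      L_assoc[OF S0_L[OF s] S0_L[OF t] S0_L[OF star0_S0[OF t]]] star0_right_unit[OF t] by simp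
  show ?thesis using Tm_eq 1 2 by simp
qed

lemma T0_Rstar: "t \<in> S0 \<Longrightarrow> Rstar T Tm (t, t) (plus0 t, plus0 t)"
  using T_Rstar[of t t] T_iff S0_L S0_R bL_of_S0 bR_of_S0 eL_of_S0 by simp

lemma T0_Lstar: "t \<in> S0 \<Longrightarrow> Lstar T Tm (t, t) (star0 t, star0 t)"
  using T_Lstar[of t t] T_iff S0_L S0_R bL_of_S0 bR_of_S0 fR_of_S0 by simp

lemma idems_T0: "(u, v) \<in> idems T0 Tm \<longleftrightarrow> u \<in> idems S0 mL \<and> v = u"
  unfolding idems_def using T0_iff Tm_T0 by auto

lemma idems_T0_elim: "p \<in> idems T0 Tm \<Longrightarrow> \<exists>e. e \<in> idems S0 mL \<and> p = (e, e)"
  using idems_T0 by (cases p) blast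

lemma T0_idems_commute: "\<forall>e\<in>idems T0 Tm. \<forall>f\<in>idems T0 Tm. Tm e f = Tm f e"
proof (intro ballI)
  fix e f assume e: "e \<in> idems T0 Tm" and f: "f \<in> idems T0 Tm"
  obtain u where u: "u \<in> idems S0 mL" "e = (u, u)" using idems_T0_elim[OF e] by blast
  obtain v where v: "v \<in> idems S0 mL" "f = (v, v)" using idems_T0_elim[OF f] by blast
  show "Tm e f = Tm f e" using Tm_T0 LT.idems0_comm[OF u(1) v(1)] u v LT.idems0_memD by simp
qed

lemma T0_semigroup: "semigroup_on T0 Tm"
  unfolding semigroup_on_def
proof (intro conjI ballI)
  fix p q assume p: "p \<in> T0" and q: "q \<in> T0"
  obtain s where s: "s \<in> S0" "p = (s, s)" using T0_elim[OF p] by blast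
  obtain t where t: "t \<in> S0" "q = (t, t)" using T0_elim[OF q] by blast
  show "Tm p q \<in> T0" using Tm_T0[OF s(1) t(1)] S0_closed[OF s(1) t(1)] T0_iff s t by simp
next
  fix p q r assume "p \<in> T0" "q \<in> T0" "r \<in> T0"
  then show "Tm (Tm p q) r = Tm p (Tm q r)"
    using T0_subset T_semigroup unfolding semigroup_on_def by blast
qed

lemma T0_Rstar_T0: "t \<in> S0 \<Longrightarrow> Rstar T0 Tm (t, t) (plus0 t, plus0 t)"
  using Rstar_restrict[OF T0_Rstar T0_subset] T0_iff plus0_S0 by simp

lemma T0_Lstar_T0: "t \<in> S0 \<Longrightarrow> Lstar T0 Tm (t, t) (star0 t, star0 t)"
  using Lstar_restrict[OF T0_Lstar T0_subset] T0_iff star0_S0 by simp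

lemma T0_plus_idem: "t \<in> S0 \<Longrightarrow> (plus0 t, plus0 t) \<in> idems T0 Tm" using idems_T0 plus0_idem by simp

lemma T0_star_idem: "t \<in> S0 \<Longrightarrow> (star0 t, star0 t) \<in> idems T0 Tm" using idems_T0 star0_idem by simp

lemma T0_adequate: "adequate T0 Tm"
proof -
  have R: "\<exists>e\<in>idems T0 Tm. Rstar T0 Tm a e" if a: "a \<in> T0" for a
  proof -
    obtain t where t: "t \<in> S0" "a = (t, t)" using T0_elim[OF a] by blast
    show ?thesis using T0_Rstar_T0[OF t(1)] T0_plus_idem[OF t(1)] t(2) by blast
  qed
  have L: "\<exists>e\<in>idems T0 Tm. Lstar T0 Tm a e" if a: "a \<in> T0" for a
  proof -
    obtain t where t: "t \<in> S0" "a = (t, t)" using T0_elim[OF a] by blast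
    show ?thesis using T0_Lstar_T0[OF t(1)] T0_star_idem[OF t(1)] t(2) by blast
  qed
  show ?thesis unfolding adequate_def abundant_def using T0_semigroup T0_idems_commute R L by blast
qed

lemma aplus_T0: "t \<in> S0 \<Longrightarrow> aplus T0 Tm (t, t) = (plus0 t, plus0 t)"
  using aplus_eqI[OF T0_idems_commute T0_plus_idem T0_Rstar_T0] by simp

lemma astar_T0: "t \<in> S0 \<Longrightarrow> astar T0 Tm (t, t) = (star0 t, star0 t)"
  using astar_eqI[OF T0_idems_commute T0_star_idem T0_Lstar_T0] by simp

lemma T0_star_subsemigroup: "adequate_star_subsemigroup T Tm T0"
proof -
  have R: "\<exists>e\<in>idems T0 Tm. Rstar T Tm a e" if a: "a \<in> T0" for a
  proof -
    obtain t where t: "t \<in> S0" "a = (t, t)" using T0_elim[OF a] by blast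
    show ?thesis using T0_Rstar[OF t(1)] T0_plus_idem[OF t(1)] t(2) by blast
  qed
  have L: "\<exists>e\<in>idems T0 Tm. Lstar T Tm a e" if a: "a \<in> T0" for a
  proof -
    obtain t where t: "t \<in> S0" "a = (t, t)" using T0_elim[OF a] by blast
    show ?thesis using T0_Lstar[OF t(1)] T0_star_idem[OF t(1)] t(2) by blast
  qed
  show ?thesis unfolding adequate_star_subsemigroup_def using T0_subset T0_adequate R L by blast
qed

lemma T_plus_GreenL:
  assumes p: "(x, a) \<in> T"
  shows "GreenL T Tm (eL x, plus0 (bL x)) (plus0 (bL x), plus0 (bL x))"
proof -
  have x: "x \<in> L" using p T_iff by auto
  define s where "s = bL x"
  have s: "s \<in> S0" using bL_S0[OF x] s_def by simp
  have ps: "plus0 s \<in> S0" using plus0_S0[OF s] .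
  have ps_self: "plus0 (plus0 s) = plus0 s \<and> star0 (plus0 s) = plus0 s"
    using plus0_star0_of_idem[OF plus0_idem[OF s]] .
  have "st (plus0 s) (plus0 s) = plus0 s"
    using st_S0_left[OF S0_R[OF ps] S0_L[OF ps] ps] plus0_sq[OF s] by simp
  then have g1: "Tm (eL x, plus0 s) (plus0 s, plus0 s) = (eL x, plus0 s)"
    using Tm_eq components_eL[OF x] eL_plus0[OF x] fR_of_S0[OF ps] ps_self plus0_sq[OF s]
      mult_agree[OF ps ps] s_def by simp
  have "st (plus0 s) (eL x) = plus0 s"
    using st_S0_left[OF S0_R[OF ps] eL_L[OF x] ps] plus0_eL[OF x] s_def by simp
  then have g2: "Tm (plus0 s, plus0 s) (eL x, plus0 s) = (plus0 s, plus0 s)"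
    using Tm_eq eL_of_S0[OF ps] ps_self plus0_sq[OF s] fR_of_S0[OF ps] mult_agree[OF ps ps] by simp
  have "(plus0 s, plus0 s) \<in> T" using T0_subset T0_iff ps by auto
  then show ?thesis using T_plus_mem[OF p] g1 g2 s_def by (intro GreenL_I) auto
qed

lemma T_star_GreenR:
  assumes p: "(x, a) \<in> T"
  shows "GreenR T Tm (star0 (bL x), fR a) (star0 (bL x), star0 (bL x))"
proof -
  have x: "x \<in> L" "a \<in> R" "bL x = bR a" using p T_iff by auto
  define s where "s = bL x"
  have s: "s \<in> S0" using bL_S0[OF x(1)] s_def by simp
  have qs: "star0 s \<in> S0" using star0_S0[OF s] .
  have qs_self: "plus0 (star0 s) = star0 s \<and> star0 (star0 s) = star0 s"
    using plus0_star0_of_idem[OF star0_idem[OF s]] .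
  have "st (star0 s) (star0 s) = star0 s"
    using st_S0_left[OF S0_R[OF qs] S0_L[OF qs] qs] star0_sq[OF s] by simp
  then have g1: "Tm (star0 s, star0 s) (star0 s, fR a) = (star0 s, fR a)"
    using Tm_eq eL_of_S0[OF qs] qs_self star0_sq[OF s] components_fR[OF x(2)] star0_fR[OF x(2)] x(3)
      s_def by simp
  have "st (fR a) (star0 s) = star0 s"
    using st_S0_right[OF fR_R[OF x(2)] S0_L[OF qs] qs] fR_star0[OF x(2)] x(3) s_def by simp
  then have g2: "Tm (star0 s, fR a) (star0 s, star0 s) = (star0 s, star0 s)"
    using Tm_eq eL_of_S0[OF qs] qs_self star0_sq[OF s] fR_of_S0[OF qs] mult_agree[OF qs qs] by simp
  have "(star0 s, star0 s) \<in> T" using T0_subset T0_iff qs by auto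
  then show ?thesis using T_star_mem[OF p] g1 g2 s_def by (intro GreenR_I) auto
qed

lemma T_factor:
  assumes p: "(x, a) \<in> T"
  shows "transversal_factorisation T Tm T0 (x, a) (bL x, bL x) (eL x, plus0 (bL x)) (star0 (bL x), fR a)"
proof -
  have x: "x \<in> L" "a \<in> R" "bL x = bR a" using p T_iff by auto
  define s where "s = bL x"
  have s: "s \<in> S0" using bL_S0[OF x(1)] s_def by simp
  have "st (plus0 s) s = s"
    using st_S0_left[OF S0_R[OF plus0_S0[OF s]] S0_L[OF s] plus0_S0[OF s]] plus0_left_unit[OF s]
    by simp
  then have m1: "Tm (eL x, plus0 s) (s, s) = (x, s)"
    using Tm_eq components_eL[OF x(1)] eL_bL_eq[OF x(1)] fR_of_S0[OF s] star0_right_unit[OF s]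
      mult_agree[OF s star0_S0[OF s]] s_def by simp
  have "st s (star0 s) = s"
    using st_S0_left[OF S0_R[OF s] S0_L[OF star0_S0[OF s]] s] star0_right_unit[OF s] by simp
  then have m2: "Tm (x, s) (star0 s, fR a) = (x, a)"
    using Tm_eq components_fR[OF x(2)] eL_bL_eq[OF x(1)] bR_fR_eq[OF x(2)] x(3) s_def by simp
  have "(eL x, plus0 s) \<in> idems T Tm" "(star0 s, fR a) \<in> idems T Tm"
    using T_plus_mem[OF p] T_plus_idem[OF p] T_star_mem[OF p] T_star_idem[OF p] s_def
    unfolding idems_def by auto
  then show ?thesis unfolding transversal_factorisation_def
    using T0_iff s m1 m2 aplus_T0[OF s] astar_T0[OF s] T_plus_GreenL[OF p] T_star_GreenR[OF p] s_def
    by simp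
qed

lemma T_idem_GreenL_second:
  assumes e: "(y, b) \<in> T" and p: "p \<in> idems S0 mL"
    and ep: "Tm (y, b) (p, p) = (y, b)" and pe: "Tm (p, p) (y, b) = (p, p)"
  shows "b \<in> S0" "star0 b = p"
proof -
  have y: "y \<in> L" "b \<in> R" using e T_iff by auto
  have p0: "p \<in> S0" and pp: "mL p p = p" using idemsD[OF p] by auto
  have p_self: "plus0 p = p \<and> star0 p = p" using plus0_star0_of_idem[OF p] .
  have bp: "st b p = mR b p" using st_S0_right[OF y(2) S0_L[OF p0] p0] .
  have bp0: "mR b p \<in> S0" using st_S0[OF y(2) S0_L[OF p0]] bp by simp
  have b_eq: "b = mR (mR b p) p" using ep Tm_eq bp fR_of_S0[OF p0] p_self by simp
  then show b0: "b \<in> S0" using S0_closed[OF bp0 p0] mult_agree[OF bp0 p0] by simp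
  have "mR (mR b p) p = mR b p"
    using R_assoc[OF y(2) S0_R[OF p0] S0_R[OF p0]] mult_agree[OF p0 p0] pp by simp
  then have bp_eq: "mL b p = b" using b_eq mult_agree[OF b0 p0] by simp
  have py: "st p y = mL p y" using st_S0_left[OF S0_R[OF p0] y(1) p0] .
  have py0: "mL p y \<in> S0" using st_S0[OF S0_R[OF p0] y(1)] py by simp
  have p_eq: "p = mL (mL p y) (star0 b)"
    using pe Tm_eq py fR_of_S0[OF b0] mult_agree[OF py0 star0_S0[OF b0]] by simp
  have "mL p (star0 b) = mL (mL (mL p y) (star0 b)) (star0 b)" using p_eq by simp
  also have "\<dots> = mL (mL p y) (star0 b)"
    using L_assoc[OF S0_L[OF py0] S0_L[OF star0_S0[OF b0]] S0_L[OF star0_S0[OF b0]]] star0_sq[OF b0]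
    by simp
  finally have "mL p (star0 b) = p" using p_eq by simp
  moreover have "mL (star0 b) p = star0 b"
    using Lstar_cancel_fix[OF LT.star0_Lstar[OF b0] S0_L[OF p0] bp_eq] .
  ultimately show "star0 b = p" using LT.idems0_comm[OF star0_idem[OF b0] p] by simp
qed

lemma T_idem_GreenL_plus0:
  assumes e: "(y, b) \<in> idems T Tm" and p: "p \<in> idems S0 mL"
    and ep: "Tm (y, b) (p, p) = (y, b)" and pe: "Tm (p, p) (y, b) = (p, p)"
  shows "b = p" "eL y = y" "bL y = p"
proof -
  have eT: "(y, b) \<in> T" and ee: "Tm (y, b) (y, b) = (y, b)" using e unfolding idems_def by auto
  have y: "y \<in> L" "b \<in> R" "bL y = bR b" using eT T_iff by auto
  have b0: "b \<in> S0" and qb: "star0 b = p" using T_idem_GreenL_second[OF eT p ep pe] by auto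
  have by_eq: "bL y = b" using y(3) bR_of_S0[OF b0] by simp
  have "y = mL (eL y) (st b y)" using ee Tm_eq by simp
  then have "y = mL (eL y) (mL b y)" using st_S0_left[OF y(2) y(1) b0] by simp
  moreover have "mL y y = mL (eL y) (mL b y)"
    using eL_bL_eq[OF y(1)] by_eq L_assoc[OF eL_L[OF y(1)] S0_L[OF b0] y(1)] by metis
  ultimately have yid: "y \<in> idems L mL" using y(1) unfolding idems_def by simp
  show "eL y = y" using LT.ee_of_idem[OF yid] .
  have "b = plus0 b" using LT.bar_of_idem_plus0[OF yid] by_eq by simp
  then have "star0 b = b" using plus0_idem[OF b0] plus0_star0_of_idem by metis
  then show "b = p" using qb by simp
  then show "bL y = p" using by_eq by simp
qed

lemma T_idem_GreenR_first:
  assumes f: "(z, c) \<in> T" and q: "q \<in> idems S0 mL"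
    and qf: "Tm (q, q) (z, c) = (z, c)" and fq: "Tm (z, c) (q, q) = (q, q)"
  shows "z \<in> S0" "plus0 z = q"
proof -
  have z: "z \<in> L" "c \<in> R" using f T_iff by auto
  have q0: "q \<in> S0" and qq: "mL q q = q" using idemsD[OF q] by auto
  have q_self: "plus0 q = q \<and> star0 q = q" using plus0_star0_of_idem[OF q] .
  have qz: "st q z = mL q z" using st_S0_left[OF S0_R[OF q0] z(1) q0] .
  have qz0: "mL q z \<in> S0" using st_S0[OF S0_R[OF q0] z(1)] qz by simp
  have z_eq: "z = mL q (mL q z)" using qf Tm_eq qz eL_of_S0[OF q0] q_self by simp
  then show z0: "z \<in> S0" using S0_closed[OF q0 qz0] by simp
  have "mL q (mL q z) = mL q z" using L_assoc[OF S0_L[OF q0] S0_L[OF q0] z(1), symmetric] qq by simp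
  then have qz_eq: "mL q z = z" using z_eq by simp
  have cq: "st c q = mR c q" using st_S0_right[OF z(2) S0_L[OF q0] q0] .
  have cq0: "mR c q \<in> S0" using st_S0[OF z(2) S0_L[OF q0]] cq by simp
  have q_eq: "q = mL (plus0 z) (mR c q)" using fq Tm_eq cq eL_of_S0[OF z0] by simp
  have "mL (plus0 z) q = mL (plus0 z) (mL (plus0 z) (mR c q))" using q_eq by simp
  also have "\<dots> = mL (plus0 z) (mR c q)"
    using L_assoc[OF S0_L[OF plus0_S0[OF z0]] S0_L[OF plus0_S0[OF z0]] S0_L[OF cq0], symmetric]
      plus0_sq[OF z0] by simp
  finally have "mL (plus0 z) q = q" using q_eq by simp
  moreover have "mL q (plus0 z) = plus0 z"
    using Rstar_cancel_fix[OF LT.plus0_Rstar[OF z0] S0_L[OF q0] qz_eq] .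
  ultimately show "plus0 z = q" using LT.idems0_comm[OF plus0_idem[OF z0] q] by simp
qed

lemma T_idem_GreenR_star0:
  assumes f: "(z, c) \<in> idems T Tm" and q: "q \<in> idems S0 mL"
    and qf: "Tm (q, q) (z, c) = (z, c)" and fq: "Tm (z, c) (q, q) = (q, q)"
  shows "z = q" "fR c = c"
proof -
  have fT: "(z, c) \<in> T" and ff: "Tm (z, c) (z, c) = (z, c)" using f unfolding idems_def by auto
  have z: "z \<in> L" "c \<in> R" "bL z = bR c" using fT T_iff by auto
  have z0: "z \<in> S0" and pz: "plus0 z = q" using T_idem_GreenR_first[OF fT q qf fq] by auto
  have bc: "bR c = z" using z(3) bL_of_S0[OF z0] by simp
  have "c = mR (st c z) (fR c)" using ff Tm_eq by simp
  then have "c = mR (mR c z) (fR c)" using st_S0_right[OF z(2) z(1) z0] by simp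
  moreover have "mR c c = mR (mR c z) (fR c)"
    using bR_fR_eq[OF z(2)] bc R_assoc[OF z(2) S0_R[OF z0] fR_R[OF z(2)]] by metis
  ultimately have cid: "c \<in> idems R mR" using z(2) unfolding idems_def by simp
  show "fR c = c" using RT.ff_of_idem[OF cid] .
  have "z = star0 z" using RT.bar_of_idem_star0[OF cid] bc star0_R by simp
  then have "plus0 z = z" using star0_idem[OF z0] plus0_star0_of_idem by metis
  then show "z = q" using pz by simp
qed

lemma T_factor_unique_bar:
  assumes p: "p \<in> T" and t: "transversal_factorisation T Tm T0 p xb e f"
  shows "xb = (bL (fst p), bL (fst p))"
proof -
  have tt: "xb \<in> T0" "e \<in> idems T Tm" "f \<in> idems T Tm" "p = Tm (Tm e xb) f"
    "GreenL T Tm e (aplus T0 Tm xb)" "GreenR T Tm f (astar T0 Tm xb)"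
    using t unfolding transversal_factorisation_def by auto
  obtain s where s: "s \<in> S0" "xb = (s, s)" using T0_elim[OF tt(1)] by blast
  have pT: "(plus0 s, plus0 s) \<in> idems T Tm" and qT: "(star0 s, star0 s) \<in> idems T Tm"
    using T0_plus_idem[OF s(1)] T0_star_idem[OF s(1)] T0_subset unfolding idems_def by auto
  obtain y b where yb: "e = (y, b)" by (cases e)
  obtain z c where zc: "f = (z, c)" by (cases f)
  have "Tm e (plus0 s, plus0 s) = e \<and> Tm (plus0 s, plus0 s) e = (plus0 s, plus0 s)"
    using GreenL_idems[OF T_semigroup tt(2) pT] tt(5) aplus_T0[OF s(1)] s(2) by simp
  then have e_eq: "b = plus0 s" "eL y = y" "bL y = plus0 s"
    using T_idem_GreenL_plus0[of y b "plus0 s"] tt(2) plus0_idem[OF s(1)] yb by auto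
  have "Tm (star0 s, star0 s) f = f \<and> Tm f (star0 s, star0 s) = (star0 s, star0 s)"
    using GreenR_idems[OF T_semigroup tt(3) qT] tt(6) astar_T0[OF s(1)] s(2) by simp
  then have f_eq: "z = star0 s" "fR c = c"
    using T_idem_GreenR_star0[of z c "star0 s"] tt(3) star0_idem[OF s(1)] zc by auto
  have y: "y \<in> L" using tt(2) yb T_iff unfolding idems_def by auto
  have "st (plus0 s) s = s"
    using st_S0_left[OF S0_R[OF plus0_S0[OF s(1)]] S0_L[OF s(1)] plus0_S0[OF s(1)]]
      plus0_left_unit[OF s(1)] by simp
  then have m1: "Tm e xb = (mL y s, s)"
    using Tm_eq yb s(2) e_eq fR_of_S0[OF s(1)] star0_right_unit[OF s(1)]
      mult_agree[OF s(1) star0_S0[OF s(1)]] by simp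
  have ys: "bL (mL y s) = s \<and> eL (mL y s) = mL y (plus0 s)"
    using components_eL_mult[OF y s(1)] e_eq plus0_left_unit[OF s(1)]
      plus0_star0_of_idem[OF plus0_idem[OF s(1)]] by simp
  have "st s z = s" using st_S0_left[OF S0_R[OF s(1)] _ s(1)] f_eq star0_right_unit[OF s(1)]
      S0_L[OF star0_S0[OF s(1)]] by simp
  then have "Tm (mL y s, s) f = (mL y s, mR s c)"
    using Tm_eq zc ys eL_plus0[OF y] e_eq eL_bL_eq[OF y] f_eq by simp
  then have "fst p = mL y s" using tt(4) m1 by simp
  then show ?thesis using ys s(2) by simp
qed

lemma T_quasi_ideal: "quasi_ideal T Tm T0"
  unfolding quasi_ideal_def
proof (intro ballI)
  fix p q r assume p: "p \<in> T0" and q: "q \<in> T" and r: "r \<in> T0"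
  obtain s where s: "s \<in> S0" "p = (s, s)" using T0_elim[OF p] by blast
  obtain t where t: "t \<in> S0" "r = (t, t)" using T0_elim[OF r] by blast
  obtain x a where xa: "q = (x, a)" by (cases q)
  have x: "x \<in> L" "a \<in> R" "bL x = bR a" using q xa T_iff by auto
  define u where "u = mL s x"
  have sx: "st s x = u" using st_S0_left[OF S0_R[OF s(1)] x(1) s(1)] u_def by simp
  have u: "u \<in> S0" using st_S0[OF S0_R[OF s(1)] x(1)] sx by simp
  have m1: "Tm (s, s) (x, a) = (u, mR u (fR a))"
    using Tm_eq sx eL_of_S0[OF s(1)]
      L_assoc[OF S0_L[OF plus0_S0[OF s(1)]] S0_L[OF s(1)] x(1), symmetric] plus0_left_unit[OF s(1)]
      u_def by simp
  have uf: "mR u (fR a) \<in> R" using R_closed[OF S0_R[OF u] fR_R[OF x(2)]] .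
  define w where "w = st (mR u (fR a)) t"
  have w: "w \<in> S0" using st_S0[OF uf S0_L[OF t(1)]] w_def by simp
  have ww: "w = mR (mR u (fR a)) t" using st_S0_right[OF uf S0_L[OF t(1)] t(1)] w_def by simp
  have Pw: "mL (plus0 u) w = w"
  proof -
    have "mL (plus0 u) w = mR (plus0 u) w" using mult_agree[OF plus0_S0[OF u] w] by simp
    also have "\<dots> = mR (plus0 u) (mR (mR u (fR a)) t)" using ww by simp
    also have "\<dots> = mR (mR (mR (plus0 u) u) (fR a)) t"
      using R_assoc[OF S0_R[OF plus0_S0[OF u]] uf S0_R[OF t(1)], symmetric]
        R_assoc[OF S0_R[OF plus0_S0[OF u]] S0_R[OF u] fR_R[OF x(2)], symmetric] by simp
    also have "\<dots> = w" using mult_agree[OF plus0_S0[OF u] u] plus0_left_unit[OF u] ww by simp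
    finally show ?thesis .
  qed
  have wQ: "mR w (star0 t) = w"
    using st_star0_bL[OF uf S0_L[OF t(1)]] bL_of_S0[OF t(1)] w_def by simp
  have "Tm (u, mR u (fR a)) (t, t) = (w, w)"
    using Tm_eq eL_of_S0[OF u] Pw fR_of_S0[OF t(1)] wQ w_def by simp
  then show "Tm (Tm p q) r \<in> T0" using m1 s t xa T0_iff w by simp
qed

lemma T_qi_adequate_transversal: "qi_adequate_transversal T Tm T0"
proof -
  have U: "\<exists>!xb. \<exists>e f. transversal_factorisation T Tm T0 p xb e f" if p: "p \<in> T" for p
  proof (rule ex1I[of _ "(bL (fst p), bL (fst p))"])
    obtain x a where xa: "p = (x, a)" by (cases p)
    have "transversal_factorisation T Tm T0 (x, a) (bL x, bL x) (eL x, plus0 (bL x)) (star0 (bL x), fR a)"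
      using T_factor p xa by simp
    then show "\<exists>e f. transversal_factorisation T Tm T0 p (bL (fst p), bL (fst p)) e f"
      using xa by auto
    fix xb assume "\<exists>e f. transversal_factorisation T Tm T0 p xb e f"
    then show "xb = (bL (fst p), bL (fst p))" using T_factor_unique_bar[OF p] by blast
  qed
  show ?thesis unfolding qi_adequate_transversal_def adequate_transversal_def
    using T_abundant T0_star_subsemigroup U T_quasi_ideal by blast
qed

lemma T0_iso_S0: "sg_iso T0 Tm S0 mL fst"
proof -
  have "bij_betw fst T0 S0"
  proof (rule bij_betwI')
    fix p q assume p: "p \<in> T0" and q: "q \<in> T0"
    obtain s where s: "p = (s, s)" using T0_elim[OF p] by blast
    obtain t where t: "q = (t, t)" using T0_elim[OF q] by blast
    show "(fst p = fst q) = (p = q)" using s t by simp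
  next
    fix p assume p: "p \<in> T0"
    obtain s where s: "s \<in> S0" "p = (s, s)" using T0_elim[OF p] by blast
    then show "fst p \<in> S0" by simp
  next
    fix s assume s: "s \<in> S0"
    then have "(s, s) \<in> T0" using T0_iff by simp
    then show "\<exists>p\<in>T0. s = fst p" by force
  qed
  moreover have "\<forall>a\<in>T0. \<forall>b\<in>T0. fst (Tm a b) = mL (fst a) (fst b)"
  proof (intro ballI)
    fix p q assume p: "p \<in> T0" and q: "q \<in> T0"
    obtain s where s: "s \<in> S0" "p = (s, s)" using T0_elim[OF p] by blast
    obtain t where t: "t \<in> S0" "q = (t, t)" using T0_elim[OF q] by blast
    show "fst (Tm p q) = mL (fst p) (fst q)" using Tm_T0[OF s(1) t(1)] s t by simp
  qed
  ultimately show ?thesis unfolding sg_iso_def by blast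
qed

end

subsection \<open>Every quasi-ideal adequate transversal arises from the construction\<close>

text \<open>The semigroup \<open>L\<close> of the converse; \<open>R\<close> is \<open>left_part\<close> for the opposite multiplication.\<close>

definition left_part :: "'a set \<Rightarrow> ('a \<Rightarrow> 'a \<Rightarrow> 'a) \<Rightarrow> 'a set \<Rightarrow> 'a set" where
  "left_part S m S0 = {x \<in> S. m (te S m S0 x) (tbar S m S0 x) = x}"

locale qi_transversal = transversal + assumes S0_quasi_ideal: "quasi_ideal S m S0"
begin

abbreviation "Lpart \<equiv> left_part S m S0"

lemma quasi_idealD: "s \<in> S0 \<Longrightarrow> x \<in> S \<Longrightarrow> t \<in> S0 \<Longrightarrow> m (m s x) t \<in> S0"
  using S0_quasi_ideal unfolding quasi_ideal_def by blast

lemma Lpart_subset: "Lpart \<subseteq> S" unfolding left_part_def by blast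

lemma Lpart_memD: "x \<in> Lpart \<Longrightarrow> x \<in> S" unfolding left_part_def by blast

lemma Lpart_eq: "x \<in> Lpart \<Longrightarrow> m (ee x) (bar x) = x" unfolding left_part_def by blast

lemma Lpart_I: "x \<in> S \<Longrightarrow> m (ee x) (bar x) = x \<Longrightarrow> x \<in> Lpart" unfolding left_part_def by blast

lemma S0_Lpart: assumes s: "s \<in> S0" shows "s \<in> Lpart"
  using Lpart_I[OF S0_memD[OF s]] ee_of_S0[OF s] bar_of_S0[OF s] plus0_left_unit[OF s] by simp

lemma Lpart_factor: assumes x: "x \<in> Lpart" shows "factor x (bar x) (ee x) (star0 (bar x))"
proof -
  have xS: "x \<in> S" using Lpart_memD[OF x] .
  have "m (m (ee x) (bar x)) (star0 (bar x)) = m (ee x) (m (bar x) (star0 (bar x)))"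
    using S_assoc[OF ee_S[OF xS] bar_S[OF xS] star0_S[OF bar_S0[OF xS]]] .
  then have e: "x = m (m (ee x) (bar x)) (star0 (bar x))"
    using star0_right_unit[OF bar_S0[OF xS]] Lpart_eq[OF x] by simp
  show ?thesis unfolding transversal_factorisation_def
    using bar_S0[OF xS] ee_idem[OF xS] idems0_in_idems[OF star0_idem[OF bar_S0[OF xS]]] e
      ee_GL[OF xS]
      GreenR_refl[OF star0_S[OF bar_S0[OF xS]]] by simp
qed

lemma Lpart_ff: "x \<in> Lpart \<Longrightarrow> ff x = star0 (bar x)" using factor_components[OF Lpart_factor] by blast

lemma ee_Lpart: assumes x: "x \<in> S" shows "ee x \<in> Lpart"
proof -
  have "bar (ee x) = plus0 (bar x) \<and> ee (ee x) = ee x"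
    using factor_components[OF factor_of_ee[OF x]] by blast
  then show ?thesis using Lpart_I[OF ee_S[OF x]] ee_plus0[OF x] by simp
qed

lemma Lpart_mult: assumes x: "x \<in> Lpart" and y: "y \<in> Lpart"
  shows "m x y \<in> Lpart \<and> bar (m x y) = m (m (bar x) (ee y)) (bar y)"
proof -
  have xS: "x \<in> S" and yS: "y \<in> S" using Lpart_memD x y by auto
  define s t u where "s = bar x" "t = bar y" "u = m (m s (ee y)) t"
  have s: "s \<in> S0" "s \<in> S" using bar_S0[OF xS] S0_memD s_t_u_def by auto
  have t: "t \<in> S0" "t \<in> S" using bar_S0[OF yS] S0_memD s_t_u_def by auto
  have eyS: "ee y \<in> S" and exS: "ee x \<in> S" using ee_S xS yS by auto
  have u: "u \<in> S0" using quasi_idealD[OF s(1) eyS t(1)] s_t_u_def by simp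
  have uS: "u \<in> S" using S0_memD[OF u] .
  have seyS: "m s (ee y) \<in> S" using S_closed[OF s(2) eyS] .
  have xy: "m x y = m (ee x) u"
  proof -
    have "m x y = m (m (ee x) s) (m (ee y) t)" using Lpart_eq[OF x] Lpart_eq[OF y] s_t_u_def by simp
    also have "\<dots> = m (ee x) (m s (m (ee y) t))"
      using S_assoc[OF exS s(2) S_closed[OF eyS t(2)]] by simp
    also have "\<dots> = m (ee x) u" using S_assoc[OF s(2) eyS t(2)] s_t_u_def by simp
    finally show ?thesis .
  qed
  have pu: "m (plus0 s) u = u"
  proof -
    have "m (plus0 s) u = m (m (plus0 s) (m s (ee y))) t"
      using S_assoc[OF plus0_S[OF s(1)] seyS t(2), symmetric] s_t_u_def by simp
    also have "\<dots> = u"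
      using S_assoc[OF plus0_S[OF s(1)] s(2) eyS, symmetric] plus0_left_unit[OF s(1)] s_t_u_def
      by simp
    finally show ?thesis .
  qed
  have pa: "bar (m (ee x) u) = u \<and> ee (m (ee x) u) = m (ee x) (plus0 u)"
    using components_idem_mult[OF ee_idem[OF xS] plus0_idem[OF s(1)] _ u pu] ee_GL[OF xS] s_t_u_def
      by blast
  have "m (m (ee x) (plus0 u)) u = m (ee x) u"
    using S_assoc[OF exS plus0_S[OF u] uS] plus0_left_unit[OF u] by simp
  then have "m (ee x) u \<in> Lpart" using Lpart_I[OF S_closed[OF exS uS]] pa by simp
  then show ?thesis using xy pa s_t_u_def by simp
qed

lemma Lpart_idem_factor: assumes e: "e \<in> idems S m" and eL: "e \<in> Lpart"
  shows "factor e (bar e) e (bar e) \<and> bar e \<in> idems S0 m"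
proof -
  have eS: "e \<in> S" using idems_memD[OF e] .
  define q where "q = star0 (bar e)"
  have q: "q \<in> idems S0 m" using star0_idem[OF bar_S0[OF eS]] q_def by simp
  have qS: "q \<in> S" using S0_memD idems0_memD[OF q] by blast
  have L: "Lstar S m e q" using Lstar_ff[OF eS] Lpart_ff[OF eL] q_def by simp
  have qe: "m q e = q" using Lstar_cancel_fix[OF L eS idems_sq[OF e]] .
  have eq: "m e q = e" using Lstar_idem_unit[OF L idems0_in_idems[OF q]] .
  have GL: "GreenL S m e q" using GreenL_I[OF eS qS eq qe] .
  have f: "factor e q e q" using factor_GreenL_idem[OF e q GL] .
  then have "bar e = q" using factor_components by blast
  then show ?thesis using f q by simp
qed

text \<open>The quasi-ideal property puts \<open>p e\<close> into \<open>S\<^sup>0\<close>, so \<open>e = g (p e)\<close> is a factorisation.\<close>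

lemma bar_GreenL_idem_mult:
  assumes g: "g \<in> idems S m" and p: "p \<in> idems S0 m" and gp: "GreenL S m g p"
    and e: "e \<in> S" and t: "t \<in> S0" and et: "m e t = e" and ge: "m g e = e"
  shows "bar e = m p e"
proof -
  have gS: "g \<in> S" and pS: "p \<in> S" and pS0: "p \<in> S0"
    using g p idems_memD idems0_memD S0_memD by auto
  have gp_eq: "m g p = g" using GreenL_idems[OF S_semigroup g idems0_in_idems[OF p] gp] by blast
  have "m p e = m (m p e) t" using et S_assoc[OF pS e S0_memD[OF t]] by simp
  then have pe: "m p e \<in> S0" using quasi_idealD[OF pS0 e t] by simp
  have ppe: "m p (m p e) = m p e" using S_assoc[OF pS pS e, symmetric] idems0_sq[OF p] by simp
  have "e = m g (m p e)" using ge gp_eq S_assoc[OF gS pS e] by metis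
  then show ?thesis using components_idem_mult[OF g p gp pe ppe] by metis
qed

lemma Lpart_Rstar_idem_unique:
  assumes x: "x \<in> Lpart" and e: "e \<in> idems S m" and eL: "e \<in> Lpart" and r: "Rstar Lpart m x e"
  shows "e = ee x"
proof -
  have xS: "x \<in> S" using Lpart_memD[OF x] .
  have eS: "e \<in> S" using idems_memD[OF e] .
  define g p t where "g = ee x" "p = plus0 (bar x)" "t = bar e"
  have gS: "g \<in> S" and g: "g \<in> idems S m" using ee_S[OF xS] ee_idem[OF xS] g_p_t_def by auto
  have p: "p \<in> idems S0 m" using plus0_idem[OF bar_S0[OF xS]] g_p_t_def by simp
  have pS0: "p \<in> S0" using idems0_memD[OF p] .
  have gp: "GreenL S m g p" and gp_eq: "m g p = g"
    using ee_GL[OF xS] ee_plus0[OF xS] g_p_t_def by auto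
  have "Rstar Lpart m e g"
    using
      Rstar_trans[OF Rstar_sym[OF r] Rstar_restrict[OF Rstar_ee[OF xS] Lpart_subset x ee_Lpart[OF xS]]]
      g_p_t_def by simp
  then have eg: "m e g = g" "m g e = e"
    using Rstar_idems[of Lpart m e g] e eL g ee_Lpart[OF xS] g_p_t_def unfolding idems_def by auto
  have fe: "factor e t e t" and t: "t \<in> idems S0 m"
    using Lpart_idem_factor[OF e eL] g_p_t_def by auto
  have tS0: "t \<in> S0" using idems0_memD[OF t] .
  have et: "GreenL S m e t" "m e t = e"
    using fe factor_e_GreenL[OF fe] plus0_of_idem[OF t] unfolding transversal_factorisation_def
    by auto
  have "t = m p e" using bar_GreenL_idem_mult[OF g p gp eS tS0 et(2) eg(2)] g_p_t_def by simp
  then have pt: "m p t = t" using S_assoc[OF S0_memD[OF pS0] S0_memD[OF pS0] eS, symmetric]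
      idems0_sq[OF p] by simp
  have "bar g = p" using factor_components[OF factor_of_ee[OF xS]] g_p_t_def by simp
  then have p_eq: "p = m t g" using bar_GreenL_idem_mult[OF e t et(1) gS pS0 gp_eq eg(1)] by simp
  then have "m t p = p" using S_assoc[OF S0_memD[OF tS0] S0_memD[OF tS0] gS, symmetric]
      idems0_sq[OF t] by simp
  then have "t = p" using pt idems0_comm[OF p t] by simp
  then show ?thesis using et(2) p_eq eg(1) S_assoc[OF eS S0_memD[OF tS0] gS] g_p_t_def by metis
qed

lemma Lpart_semigroup: "semigroup_on Lpart m"
  unfolding semigroup_on_def using Lpart_mult S_assoc Lpart_memD by blast

lemma idems_Lpart: "idems Lpart m = idems S m \<inter> Lpart" unfolding idems_def
  using Lpart_subset by blast

lemma Lpart_abundant: "abundant Lpart m"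
proof -
  have R: "\<exists>e\<in>idems Lpart m. Rstar Lpart m a e" if a: "a \<in> Lpart" for a
  proof -
    have aS: "a \<in> S" using Lpart_memD[OF a] .
    have "ee a \<in> idems Lpart m" using idems_Lpart ee_idem[OF aS] ee_Lpart[OF aS] by blast
    moreover have "Rstar Lpart m a (ee a)"
      using Rstar_restrict[OF Rstar_ee[OF aS] Lpart_subset a ee_Lpart[OF aS]] .
    ultimately show ?thesis by blast
  qed
  have L: "\<exists>e\<in>idems Lpart m. Lstar Lpart m a e" if a: "a \<in> Lpart" for a
  proof -
    have aS: "a \<in> S" using Lpart_memD[OF a] .
    have s: "star0 (bar a) \<in> Lpart" using S0_Lpart[OF star0_S0[OF bar_S0[OF aS]]] .
    have "star0 (bar a) \<in> idems Lpart m"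
      using idems_Lpart idems0_in_idems[OF star0_idem[OF bar_S0[OF aS]]] s by blast
    moreover have "Lstar Lpart m a (star0 (bar a))"
      using Lstar_restrict[OF Lstar_ff[OF aS] Lpart_subset a] Lpart_ff[OF a] s by simp
    ultimately show ?thesis by blast
  qed
  show ?thesis unfolding abundant_def using Lpart_semigroup R L by blast
qed

lemma Lpart_left_adequate: "left_adequate Lpart m"
proof -
  have "\<exists>!e. e \<in> idems Lpart m \<and> Rstar Lpart m a e" if a: "a \<in> Lpart" for a
  proof (rule ex1I[of _ "ee a"])
    have aS: "a \<in> S" using Lpart_memD[OF a] .
    show "ee a \<in> idems Lpart m \<and> Rstar Lpart m a (ee a)"
      using idems_Lpart ee_idem[OF aS] ee_Lpart[OF aS]
        Rstar_restrict[OF Rstar_ee[OF aS] Lpart_subset a ee_Lpart[OF aS]] by blast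
    fix e assume "e \<in> idems Lpart m \<and> Rstar Lpart m a e"
    then show "e = ee a" using Lpart_Rstar_idem_unique[OF a] idems_Lpart by blast
  qed
  then show ?thesis unfolding left_adequate_def using Lpart_abundant by blast
qed

lemma Lpart_factor_in:
  assumes x: "x \<in> Lpart"
  shows "transversal_factorisation Lpart m S0 x (bar x) (ee x) (star0 (bar x))"
proof -
  have xS: "x \<in> S" using Lpart_memD[OF x] .
  have f: "factor x (bar x) (ee x) (star0 (bar x))" using Lpart_factor[OF x] .
  have eL: "ee x \<in> Lpart" using ee_Lpart[OF xS] .
  have pL: "plus0 (bar x) \<in> Lpart" using S0_Lpart[OF plus0_S0[OF bar_S0[OF xS]]] .
  have sL: "star0 (bar x) \<in> Lpart" using S0_Lpart[OF star0_S0[OF bar_S0[OF xS]]] .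
  have i1: "ee x \<in> idems Lpart m" using idems_Lpart ee_idem[OF xS] eL by blast
  have i2: "star0 (bar x) \<in> idems Lpart m"
    using idems_Lpart idems0_in_idems[OF star0_idem[OF bar_S0[OF xS]]] sL by blast
  have GL: "GreenL Lpart m (ee x) (plus0 (bar x))"
    using GreenL_I[OF eL pL ee_plus0[OF xS] plus0_ee[OF xS]] .
  show ?thesis using f i1 i2 GL GreenR_refl[OF sL] unfolding transversal_factorisation_def by blast
qed

lemma Lpart_components: assumes x: "x \<in> Lpart"
  shows "tbar Lpart m S0 x = bar x \<and> te Lpart m S0 x = ee x \<and> tf Lpart m S0 x = star0 (bar x)"
  using components_subset[OF Lpart_subset Lpart_factor_in[OF x]] .

lemma Lpart_adequate_transversal: "adequate_transversal Lpart m S0"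
proof -
  have S0L: "S0 \<subseteq> Lpart" using S0_Lpart by blast
  have R: "\<exists>e\<in>idems S0 m. Rstar Lpart m a e" if a: "a \<in> S0" for a
    using plus0_idem[OF a]
      Rstar_restrict[OF plus0_Rstar[OF a] Lpart_subset S0_Lpart[OF a] S0_Lpart[OF plus0_S0[OF a]]]
      by blast
  have L: "\<exists>e\<in>idems S0 m. Lstar Lpart m a e" if a: "a \<in> S0" for a
    using star0_idem[OF a]
      Lstar_restrict[OF star0_Lstar[OF a] Lpart_subset S0_Lpart[OF a] S0_Lpart[OF star0_S0[OF a]]]
      by blast
  have S0_star_subsemigroup: "adequate_star_subsemigroup Lpart m S0"
    unfolding adequate_star_subsemigroup_def using S0L S0_adequate R L by blast
  have U: "\<exists>!xb. \<exists>e f. transversal_factorisation Lpart m S0 x xb e f" if x: "x \<in> Lpart" for x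
  proof (rule ex1I[of _ "bar x"])
    show "\<exists>e f. transversal_factorisation Lpart m S0 x (bar x) e f"
      using Lpart_factor_in[OF x] by blast
    fix y assume "\<exists>e f. transversal_factorisation Lpart m S0 x y e f"
    then obtain e f where "transversal_factorisation Lpart m S0 x y e f" by blast
    then show "y = bar x" using factor_components[OF factor_mono[OF Lpart_subset]] by blast
  qed
  show ?thesis unfolding adequate_transversal_def
    using Lpart_abundant S0_star_subsemigroup U by blast
qed

lemma Lpart_quasi_ideal: "quasi_ideal Lpart m S0"
  unfolding quasi_ideal_def using quasi_idealD Lpart_memD by blast

lemma Lpart_qi_adequate_transversal: "qi_adequate_transversal Lpart m S0"
  unfolding qi_adequate_transversal_def using Lpart_adequate_transversal Lpart_quasi_ideal by blast

end

lemma qi_adequate_transversal_opp: assumes q: "qi_adequate_transversal X (\<lambda>a b. m b a) S0"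
  shows "qi_adequate_transversal X m S0"
proof -
  have a: "adequate_transversal X (\<lambda>a b. m b a) S0" and qo: "quasi_ideal X (\<lambda>a b. m b a) S0"
    using q unfolding qi_adequate_transversal_def by auto
  interpret E: transversal X "\<lambda>a b. m b a" S0 using a by unfold_locales
  interpret F: transversal X m S0 using E.transversal_opp by simp
  have "m (m s x) t \<in> S0" if "s \<in> S0" "x \<in> X" "t \<in> S0" for s x t
  proof -
    have "m s (m x t) \<in> S0" using qo that unfolding quasi_ideal_def by blast
    then show ?thesis
      using F.S_assoc[OF F.S0_memD[OF that(1)] that(2) F.S0_memD[OF that(3)]] by simp
  qed
  then show ?thesis unfolding qi_adequate_transversal_def quasi_ideal_def
    using F.transversal by blast
qed

context qi_transversal begin

lemma qi_transversal_opp: "qi_transversal S (\<lambda>a b. m b a) S0"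
proof -
  interpret D: transversal S "\<lambda>a b. m b a" S0 by (rule transversal_opp)
  show ?thesis
  proof
    show "quasi_ideal S (\<lambda>a b. m b a) S0" unfolding quasi_ideal_def
    proof (intro ballI)
      fix s x t assume a: "s \<in> S0" "x \<in> S" "t \<in> S0"
      have "m (m t x) s \<in> S0" using quasi_idealD[OF a(3) a(2) a(1)] .
      then show "(\<lambda>a b. m b a) ((\<lambda>a b. m b a) s x) t \<in> S0"
        using S_assoc[OF S0_memD[OF a(3)] a(2) S0_memD[OF a(1)]] by simp
    qed
  qed
qed

abbreviation "Rpart \<equiv> left_part S (\<lambda>a b. m b a) S0"

lemma Rpart_eq_set: "Rpart = {x \<in> S. m (bar x) (ff x) = x}"
  unfolding left_part_def te_opp tbar_opp by simp

lemma Rpart_memD: "a \<in> Rpart \<Longrightarrow> a \<in> S" unfolding Rpart_eq_set by blast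

lemma Rpart_eq: "a \<in> Rpart \<Longrightarrow> m (bar a) (ff a) = a" unfolding Rpart_eq_set by blast

lemma Rpart_I: "a \<in> S \<Longrightarrow> m (bar a) (ff a) = a \<Longrightarrow> a \<in> Rpart" unfolding Rpart_eq_set by blast

lemma Rpart_qi_adequate_transversal: "qi_adequate_transversal Rpart m S0"
proof -
  interpret D: qi_transversal S "\<lambda>a b. m b a" S0 by (rule qi_transversal_opp)
  show ?thesis using qi_adequate_transversal_opp[OF D.Lpart_qi_adequate_transversal] .
qed

lemma Rpart_right_adequate: "right_adequate Rpart m"
proof -
  interpret D: qi_transversal S "\<lambda>a b. m b a" S0 by (rule qi_transversal_opp)
  show ?thesis using D.Lpart_left_adequate by (simp only: left_adequate_opp[of Rpart m])
qed

lemma Rpart_components: assumes a: "a \<in> Rpart"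
  shows "tbar Rpart m S0 a = bar a \<and> tf Rpart m S0 a = ff a \<and> te Rpart m S0 a = plus0 (bar a)"
proof -
  interpret D: qi_transversal S "\<lambda>a b. m b a" S0 by (rule qi_transversal_opp)
  interpret E: transversal Rpart m S0
    using Rpart_qi_adequate_transversal unfolding qi_adequate_transversal_def by unfold_locales
      blast
  show ?thesis
    using D.Lpart_components[OF a] unfolding E.tbar_opp E.te_opp E.tf_opp tbar_opp te_opp
      astar_opp[of S0 m] by simp
qed

lemma Rpart_Lpart_mult_S0: assumes a: "a \<in> Rpart" and x: "x \<in> Lpart" shows "m a x \<in> S0"
proof -
  have aS: "a \<in> S" and xS: "x \<in> S" using Rpart_memD Lpart_memD a x by auto
  have b: "bar a \<in> S" "bar a \<in> S0" and t: "bar x \<in> S" "bar x \<in> S0" using bar_S bar_S0 aS xS by auto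
  have f: "ff a \<in> S" and e: "ee x \<in> S" using ff_S ee_S aS xS by auto
  have "m a x = m (m (bar a) (ff a)) (m (ee x) (bar x))" using Rpart_eq[OF a] Lpart_eq[OF x] by simp
  also have "\<dots> = m (m (bar a) (m (ff a) (ee x))) (bar x)"
    using S_assoc b t f e S_closed by simp
  finally show ?thesis using quasi_idealD[OF b(2) S_closed[OF f e] t(2)] by simp
qed

definition "T_S = T_set Lpart m Rpart m S0"

definition "Tm_S = T_mult Lpart m Rpart m S0 m"

lemma T_S_iff: "(x, a) \<in> T_S \<longleftrightarrow> x \<in> Lpart \<and> a \<in> Rpart \<and> bar x = bar a"
  unfolding T_S_def T_set_def using Lpart_components Rpart_components by auto

lemma Tm_S_eq: assumes "x \<in> Lpart" "b \<in> Rpart"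
  shows "Tm_S (x, a) (y, b) = (m (ee x) (m a y), m (m a y) (ff b))"
  unfolding Tm_S_def T_mult_def
  using Lpart_components[OF assms(1)] Rpart_components[OF assms(2)] by simp

definition "phi = (\<lambda>(x, a). m x (ff a))"

lemma phi_fac: assumes p: "(x, a) \<in> T_S" shows "factor (phi (x, a)) (bar x) (ee x) (ff a)"
proof -
  have x: "x \<in> Lpart" and a: "a \<in> Rpart" and ba: "bar x = bar a" using p T_S_iff by auto
  have xS: "x \<in> S" and aS: "a \<in> S" using Lpart_memD Rpart_memD x a by auto
  have "phi (x, a) = m (m (ee x) (bar x)) (ff a)" unfolding phi_def using Lpart_eq[OF x] by simp
  then show ?thesis unfolding transversal_factorisation_def
    using bar_S0[OF xS] ee_idem[OF xS] ff_idem[OF aS] ee_GL[OF xS] ff_GR[OF aS] ba by simp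
qed

lemma phi_bij: "bij_betw phi T_S S"
proof (rule bij_betwI')
  fix p q assume p: "p \<in> T_S" and q: "q \<in> T_S"
  obtain x a where pxa: "p = (x, a)" by (cases p)
  obtain y b where qyb: "q = (y, b)" by (cases q)
  have fp: "factor (phi (x, a)) (bar x) (ee x) (ff a)" using phi_fac p pxa by simp
  have fq: "factor (phi (y, b)) (bar y) (ee y) (ff b)" using phi_fac q qyb by simp
  have x: "x \<in> Lpart" "a \<in> Rpart" "bar x = bar a" using p pxa T_S_iff by auto
  have y: "y \<in> Lpart" "b \<in> Rpart" "bar y = bar b" using q qyb T_S_iff by auto
  show "(phi p = phi q) = (p = q)"
  proof
    assume e: "phi p = phi q"
    then have "bar x = bar y \<and> ee x = ee y \<and> ff a = ff b"
      using factor_components[OF fp] factor_components[OF fq] pxa qyb by metis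
    then show "p = q"
      using Lpart_eq[OF x(1)] Lpart_eq[OF y(1)] Rpart_eq[OF x(2)] Rpart_eq[OF y(2)] x(3) y(3) pxa
        qyb
      by metis
  qed simp
next
  fix p assume "p \<in> T_S" then show "phi p \<in> S" using phi_fac factor_mem by (cases p) blast
next
  fix z assume z: "z \<in> S"
  define x a where "x = m (ee z) (bar z)" "a = m (bar z) (ff z)"
  have px: "bar x = bar z \<and> ee x = m (ee z) (plus0 (bar z))"
    using
      components_idem_mult[OF ee_idem[OF z] plus0_idem[OF bar_S0[OF z]] ee_GL[OF z] bar_S0[OF z] plus0_left_unit[OF bar_S0[OF z]]]
      x_a_def by simp
  have pa: "bar a = bar z \<and> ff a = m (star0 (bar z)) (ff z)"
    using
      components_mult_idem[OF ff_idem[OF z] star0_idem[OF bar_S0[OF z]] ff_GR[OF z] bar_S0[OF z] star0_right_unit[OF bar_S0[OF z]]]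
      x_a_def by simp
  have eL_bL_eq: "x \<in> Lpart"
    using Lpart_I[of x] px ee_plus0[OF z] S_closed[OF ee_S[OF z] bar_S[OF z]] x_a_def by simp
  have bR_fR_eq: "a \<in> Rpart"
    using Rpart_I[of a] pa star0_ff[OF z] S_closed[OF bar_S[OF z] ff_S[OF z]] x_a_def by simp
  have "(x, a) \<in> T_S" using T_S_iff eL_bL_eq bR_fR_eq px pa by simp
  moreover have "z = phi (x, a)" unfolding phi_def
    using pa star0_ff[OF z] canonical_eq[OF z] x_a_def by simp
  ultimately show "\<exists>p\<in>T_S. z = phi p" by blast
qed

lemma phi_hom: assumes p: "p \<in> T_S" and q: "q \<in> T_S" shows "phi (Tm_S p q) = m (phi p) (phi q)"
proof -
  obtain x a where pxa: "p = (x, a)" by (cases p)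
  obtain y b where qyb: "q = (y, b)" by (cases q)
  have x: "x \<in> Lpart" "a \<in> Rpart" "bar x = bar a" using p pxa T_S_iff by auto
  have y: "y \<in> Lpart" "b \<in> Rpart" "bar y = bar b" using q qyb T_S_iff by auto
  have xS: "x \<in> S" and aS: "a \<in> S" and yS: "y \<in> S" and bS: "b \<in> S"
    using Lpart_memD Rpart_memD x y by auto
  define s t ex ey fa fb w where "s = bar x" "t = bar y" "ex = ee x" "ey = ee y" "fa = ff a" "fb = ff b"
    "w = m a y"
  have S: "s \<in> S" "t \<in> S" "ex \<in> S" "ey \<in> S" "fa \<in> S" "fb \<in> S"
    using bar_S ee_S ff_S xS yS aS bS s_t_ex_ey_fa_fb_w_def by auto
  have t0: "t \<in> S0" using bar_S0[OF yS] s_t_ex_ey_fa_fb_w_def by simp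
  have xe: "x = m ex s" using Lpart_eq[OF x(1)] s_t_ex_ey_fa_fb_w_def by simp
  have ye: "y = m ey t" using Lpart_eq[OF y(1)] s_t_ex_ey_fa_fb_w_def by simp
  have ae: "a = m s fa" using Rpart_eq[OF x(2)] x(3) s_t_ex_ey_fa_fb_w_def by simp
  have be: "b = m t fb" using Rpart_eq[OF y(2)] y(3) s_t_ex_ey_fa_fb_w_def by simp
  have w0: "w \<in> S0" using Rpart_Lpart_mult_S0[OF x(2) y(1)] s_t_ex_ey_fa_fb_w_def by simp
  have wS: "w \<in> S" using S0_memD[OF w0] .
  have tb: "bar b = t" using y(3) s_t_ex_ey_fa_fb_w_def by simp
  have wq: "m w (star0 (bar b)) = w"
  proof -
    have "m w (star0 (bar b)) = m (m a y) (star0 t)" using tb s_t_ex_ey_fa_fb_w_def(7) by simp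
    also have "\<dots> = m (m a (m ey t)) (star0 t)" using ye by simp
    also have "\<dots> = m a (m ey (m t (star0 t)))" using S_assoc S S_closed aS star0_S[OF t0] by simp
    also have "\<dots> = m a (m ey t)" using star0_right_unit[OF t0] by simp
    also have "\<dots> = w" using ye s_t_ex_ey_fa_fb_w_def(7) by simp
    finally show ?thesis .
  qed
  have ffw: "ff (m w fb) = m (star0 w) fb"
    using components_mult_idem[OF ff_idem[OF bS] star0_idem[OF bar_S0[OF bS]] ff_GR[OF bS] w0 wq]
      s_t_ex_ey_fa_fb_w_def by simp
  have "Tm_S p q = (m ex w, m w fb)"
    using Tm_S_eq[OF x(1) y(2)] pxa qyb s_t_ex_ey_fa_fb_w_def by simp
  then have "phi (Tm_S p q) = m (m ex w) (m (star0 w) fb)" unfolding phi_def using ffw by simp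
  also have "\<dots> = m ex (m (m w (star0 w)) fb)" using S_assoc S wS star0_S[OF w0] S_closed by simp
  also have "\<dots> = m ex (m w fb)" using star0_right_unit[OF w0] by simp
  also have "\<dots> = m (m x fa) (m y fb)"
    unfolding s_t_ex_ey_fa_fb_w_def(7) using xe ae S_assoc S S_closed yS by simp
  also have "\<dots> = m (phi p) (phi q)" unfolding phi_def using pxa qyb s_t_ex_ey_fa_fb_w_def by simp
  finally show ?thesis .
qed

lemma phi_T0: "phi ` T0_set S0 = S0"
proof -
  have "phi (s, s) = s" if "s \<in> S0" for s unfolding phi_def
    using ff_of_S0[OF that] star0_right_unit[OF that] by simp
  then show ?thesis unfolding T0_set_def by force
qed

lemma Lpart_Rpart_construction_data: "construction_data Lpart m Rpart m S0 m"
proof -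
  have st_assoc: "m (m (m a y) (tf Rpart m S0 b)) z = m a (m (te Lpart m S0 y) (m b z))"
    if y: "y \<in> Lpart" and z: "z \<in> Lpart" and a: "a \<in> Rpart" and b: "b \<in> Rpart" and e: "tbar Lpart m S0 y = tbar Rpart m S0 b"
    for y z a b
  proof -
    have yS: "y \<in> S" and zS: "z \<in> S" and aS: "a \<in> S" and bS: "b \<in> S"
      using Lpart_memD Rpart_memD y z a b by auto
    define t ey fb where "t = bar y" "ey = ee y" "fb = ff b"
    have S: "t \<in> S" "ey \<in> S" "fb \<in> S" using bar_S ee_S ff_S yS bS t_ey_fb_def by auto
    have bb: "bar b = t" using e Lpart_components[OF y] Rpart_components[OF b] t_ey_fb_def by simp
    have ye: "y = m ey t" using Lpart_eq[OF y] t_ey_fb_def by simp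
    have be: "b = m t fb" using Rpart_eq[OF b] bb t_ey_fb_def by simp
    have "m (m (m a y) (tf Rpart m S0 b)) z = m (m (m a (m ey t)) fb) z"
      using Rpart_components[OF b] ye t_ey_fb_def by simp
    also have "\<dots> = m a (m ey (m (m t fb) z))" using S_assoc S S_closed aS zS by simp
    also have "\<dots> = m a (m (te Lpart m S0 y) (m b z))"
      using Lpart_components[OF y] be t_ey_fb_def by simp
    finally show ?thesis .
  qed
  show ?thesis unfolding construction_data_def
    using S0_adequate Lpart_left_adequate Rpart_right_adequate Lpart_qi_adequate_transversal
      Rpart_qi_adequate_transversal Rpart_Lpart_mult_S0 st_assoc by blast
qed

lemma phi_iso: "sg_iso T_S Tm_S S m phi"
  unfolding sg_iso_def using phi_bij phi_hom by blast

end

lemma construction_sound: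
  assumes "construction_data L mL R mR S0 st"
  shows "abundant (T_set L mL R mR S0) (T_mult L mL R mR S0 st) \<and>
    qi_adequate_transversal (T_set L mL R mR S0) (T_mult L mL R mR S0 st) (T0_set S0) \<and>
    (\<exists>\<phi>. sg_iso (T0_set S0) (T_mult L mL R mR S0 st) S0 mL \<phi>)"
proof -
  interpret construction L mL R mR S0 st using assms by (rule construction.intro)
  show ?thesis using T_abundant T_qi_adequate_transversal T0_iso_S0 by blast
qed

lemma construction_complete:
  assumes "qi_adequate_transversal S m S0"
  shows "\<exists>L mL R mR st. construction_data L mL R mR S0 st \<and> (\<forall>s\<in>S0. \<forall>t\<in>S0. mL s t = m s t) \<and>
    (\<exists>\<phi>. sg_iso (T_set L mL R mR S0) (T_mult L mL R mR S0 st) S m \<phi> \<and> \<phi> ` T0_set S0 = S0)"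
proof -
  interpret qi_transversal S m S0
    using assms unfolding qi_adequate_transversal_def by unfold_locales blast+
  show ?thesis
    using Lpart_Rpart_construction_data phi_iso phi_T0 unfolding T_S_def Tm_S_def by blast
qed

theorem theorem2p8:
  shows "(\<forall>(L :: 'a set) mL R mR S0 st. construction_data L mL R mR S0 st \<longrightarrow>
            abundant (T_set L mL R mR S0) (T_mult L mL R mR S0 st) \<and>
            qi_adequate_transversal (T_set L mL R mR S0) (T_mult L mL R mR S0 st) (T0_set S0) \<and>
            (\<exists>\<phi>. sg_iso (T0_set S0) (T_mult L mL R mR S0 st) S0 mL \<phi>))
       \<and>
         (\<forall>(S :: 'b set) m S0. qi_adequate_transversal S m S0 \<longrightarrow>
            (\<exists>L mL R mR st. construction_data L mL R mR S0 st \<and>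
               (\<forall>s\<in>S0. \<forall>t\<in>S0. mL s t = m s t) \<and>
               (\<exists>\<phi>. sg_iso (T_set L mL R mR S0) (T_mult L mL R mR S0 st) S m \<phi> \<and>
                     \<phi> ` T0_set S0 = S0)))"
  using construction_sound construction_complete by blast

end
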